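(* Let $\mu$ be a Borel probability measure on $\mathbb{R}^d$ with a $C^1$ density $f$ such that both $f$ and $\|\nabla f\|$ are bounded. Then for all $\rho\in(0,1)$ and $x\in\mathbb{R}^d$ the equation $F_{\rho,\mu}(x,\sigma)=0$ has a unique solution $\sigma=\sigma^*_{\rho,\mu}(x)>0$. Moreover, $x\mapsto\sigma^*_{\rho,\mu}(x)$ is smooth.
   Context: For $x\in\mathbb{R}^d$, $\sigma>0$: $F_{\rho,\mu}(x,\sigma)=\int w_{x,\sigma}(x')\log w_{x,\sigma}(x')\,d\mu(x')+\log\rho$, where $w_{x,\sigma}(x')=\exp(-\|x-x'\|^2/2\sigma^2)/\int\exp(-\|x-z\|^2/2\sigma^2)\,d\mu(z)$. *)

theory Defs
  imports "HOL-Analysis.Analysis" "HOL-Probability.Probability"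
begin

definition gauss_w :: "'a::euclidean_space measure \<Rightarrow> 'a \<Rightarrow> real \<Rightarrow> 'a \<Rightarrow> real" where
  "gauss_w \<mu> x \<sigma> x' =
     exp (- (norm (x - x'))\<^sup>2 / (2 * \<sigma>\<^sup>2)) /
     (\<integral>z. exp (- (norm (x - z))\<^sup>2 / (2 * \<sigma>\<^sup>2)) \<partial>\<mu>)"

definition F_fun :: "real \<Rightarrow> 'a::euclidean_space measure \<Rightarrow> 'a \<Rightarrow> real \<Rightarrow> real" where
  "F_fun \<rho> \<mu> x \<sigma> =
     (\<integral>x'. gauss_w \<mu> x \<sigma> x' * ln (gauss_w \<mu> x \<sigma> x') \<partial>\<mu>) + ln \<rho>"

fun Ck_on :: "nat \<Rightarrow> 'a::real_normed_vector set \<Rightarrow> ('a \<Rightarrow> real) \<Rightarrow> bool" where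
  "Ck_on 0 S g = continuous_on S g"
| "Ck_on (Suc n) S g =
     (\<exists>g'. (\<forall>x\<in>S. (g has_derivative g' x) (at x)) \<and> (\<forall>v. Ck_on n S (\<lambda>x. g' x v)))"

definition smooth_on :: "'a::real_normed_vector set \<Rightarrow> ('a \<Rightarrow> real) \<Rightarrow> bool" where
  "smooth_on S g \<longleftrightarrow> (\<forall>k. Ck_on k S g)"

end

theory Submission
  imports Defs
begin

text \<open>Write Z, a and c for the integrals of 1, |x - y|^2 and |x - y|^4 against the Gaussian kernel
  exp (- |x - y|^2 / (2 \<sigma>^2)) d\<mu>(y). Then F = - a / (2 \<sigma>^2 Z) - ln Z + ln \<rho> and
  dF/d\<sigma> = - (c Z - a^2) / (2 \<sigma>^5 Z^2) < 0: c Z - a^2 is a variance of |x - y|^2, which vanishes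
  only if |x - y| is \<mu>-a.e. constant, and spheres are \<mu>-null. For large \<sigma>, Z tends to 1 > \<rho>, so
  F < 0; for small \<sigma> the weights w concentrate on a ball of small \<mu>-measure, which makes the
  entropy integral of w ln w, hence F, positive. So F (x, _) has exactly one zero.
  All (x, \<sigma>)-derivatives of the integrands are polynomials in x - y and 1/\<sigma> times the kernel,
  so F is smooth on R^d \<times> (0, \<infinity>) by differentiation under the integral sign, and the implicit
  function theorem makes the zero smooth in x.\<close>

section \<open>C^k functions\<close>

lemma Ck_on_SucD: "Ck_on (Suc n) S g \<Longrightarrow> Ck_on n S g"
proof (induction n arbitrary: g)
  case 0
  then obtain g' where "\<forall>x\<in>S. (g has_derivative g' x) (at x)" by auto
  then show ?case
    by (auto intro!: continuous_at_imp_continuous_on dest: has_derivative_continuous)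
next
  case (Suc n)
  then show ?case by (metis Ck_on.simps(2))
qed

lemma Ck_on_le:
  assumes "m \<le> n" "Ck_on n S g"
  shows "Ck_on m S g"
  using assms(1)
  by (induction rule: inc_induct) (auto intro: assms(2) Ck_on_SucD simp del: Ck_on.simps)

lemma Ck_on_const: "Ck_on n S (\<lambda>x. c)"
proof (induction n arbitrary: c)
  case 0 then show ?case by simp
next
  case (Suc n)
  show ?case unfolding Ck_on.simps
    by (rule exI[of _ "\<lambda>x v. 0"]) (auto intro: Suc)
qed

lemma Ck_on_add: "Ck_on n S f \<Longrightarrow> Ck_on n S g \<Longrightarrow> Ck_on n S (\<lambda>x. f x + g x)"
proof (induction n arbitrary: f g)
  case 0 then show ?case by (auto intro: continuous_on_add)
next
  case (Suc n)
  from Suc.prems obtain f' g'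
    where f: "\<forall>x\<in>S. (f has_derivative f' x) (at x)" "\<forall>v. Ck_on n S (\<lambda>x. f' x v)"
      and g: "\<forall>x\<in>S. (g has_derivative g' x) (at x)" "\<forall>v. Ck_on n S (\<lambda>x. g' x v)"
    by auto
  show ?case unfolding Ck_on.simps
    by (rule exI[of _ "\<lambda>x v. f' x v + g' x v"]) (use f g in \<open>auto intro: Suc.IH has_derivative_add\<close>)
qed

lemma Ck_on_mult: "Ck_on n S f \<Longrightarrow> Ck_on n S g \<Longrightarrow> Ck_on n S (\<lambda>x. f x * g x)"
proof (induction n arbitrary: f g)
  case 0 then show ?case by (auto intro: continuous_on_mult)
next
  case (Suc n)
  from Suc.prems obtain f' g'
    where f: "\<forall>x\<in>S. (f has_derivative f' x) (at x)" "\<forall>v. Ck_on n S (\<lambda>x. f' x v)"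
      and g: "\<forall>x\<in>S. (g has_derivative g' x) (at x)" "\<forall>v. Ck_on n S (\<lambda>x. g' x v)"
    by auto
  have fn: "Ck_on n S f" and gn: "Ck_on n S g" using Suc.prems Ck_on_SucD by blast+
  show ?case unfolding Ck_on.simps
    by (rule exI[of _ "\<lambda>x v. f x * g' x v + f' x v * g x"])
      (use f g fn gn in \<open>auto intro!: Suc.IH Ck_on_add has_derivative_mult\<close>)
qed

lemma Ck_on_minus: "Ck_on n S f \<Longrightarrow> Ck_on n S (\<lambda>x. - f x)"
  using Ck_on_mult[OF Ck_on_const[of n S "-1"], of f] by simp

lemma Ck_on_inverse: "Ck_on n S f \<Longrightarrow> (\<forall>x\<in>S. f x \<noteq> 0) \<Longrightarrow> Ck_on n S (\<lambda>x. inverse (f x))"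
proof (induction n arbitrary: f)
  case 0 then show ?case by (auto intro: continuous_on_inverse)
next
  case (Suc n)
  from Suc.prems obtain f'
    where f: "\<forall>x\<in>S. (f has_derivative f' x) (at x)" "\<forall>v. Ck_on n S (\<lambda>x. f' x v)"
    by auto
  have fn: "Ck_on n S f" using Suc.prems Ck_on_SucD by blast
  have IH: "Ck_on n S (\<lambda>x. inverse (f x))" using Suc.IH[OF fn] Suc.prems by blast
  show ?case unfolding Ck_on.simps
    by (rule exI[of _ "\<lambda>x v. - (inverse (f x) * f' x v * inverse (f x))"])
      (use f IH Suc.prems in \<open>auto intro!: Ck_on_mult Ck_on_minus has_derivative_inverse'\<close>)
qed

lemma Ck_on_ln: "Ck_on n S f \<Longrightarrow> (\<forall>x\<in>S. f x > 0) \<Longrightarrow> Ck_on n S (\<lambda>x. ln (f x))"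
proof (induction n arbitrary: f)
  case 0 then show ?case by (auto intro!: continuous_on_ln)
next
  case (Suc n)
  from Suc.prems obtain f'
    where f: "\<forall>x\<in>S. (f has_derivative f' x) (at x)" "\<forall>v. Ck_on n S (\<lambda>x. f' x v)"
    by auto
  have fn: "Ck_on n S f" using Suc.prems Ck_on_SucD by blast
  have inv: "Ck_on n S (\<lambda>x. inverse (f x))" using Ck_on_inverse[OF fn] Suc.prems by force
  show ?case unfolding Ck_on.simps
    by (rule exI[of _ "\<lambda>x v. f' x v * inverse (f x)"])
      (use f inv Suc.prems in \<open>auto intro!: Ck_on_mult has_derivative_ln\<close>)
qed

lemma Ck_on_diff: "Ck_on n S f \<Longrightarrow> Ck_on n S g \<Longrightarrow> Ck_on n S (\<lambda>x. f x - g x)"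
  unfolding diff_conv_add_uminus by (rule Ck_on_add[OF _ Ck_on_minus])

lemma Ck_on_divide:
  "Ck_on n S f \<Longrightarrow> Ck_on n S g \<Longrightarrow> (\<forall>x\<in>S. g x \<noteq> 0) \<Longrightarrow> Ck_on n S (\<lambda>x. f x / g x)"
  unfolding divide_inverse by (rule Ck_on_mult[OF _ Ck_on_inverse])

lemma Ck_on_power: "Ck_on n S f \<Longrightarrow> Ck_on n S (\<lambda>x. f x ^ k)"
  by (induction k) (simp_all add: Ck_on_const Ck_on_mult)

lemma Ck_on_snd: "Ck_on n S snd"
proof (cases n)
  case (Suc m)
  show ?thesis unfolding Suc Ck_on.simps
    by (intro exI[of _ "\<lambda>p v. snd v"] conjI ballI allI Ck_on_const has_derivative_snd
        has_derivative_ident)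
qed (auto intro: continuous_on_snd continuous_on_id)

lemma Ck_on_cong: "open S \<Longrightarrow> (\<And>x. x \<in> S \<Longrightarrow> f x = g x) \<Longrightarrow> Ck_on n S f \<Longrightarrow> Ck_on n S g"
proof (induction n arbitrary: f g)
  case 0 then show ?case using continuous_on_cong by force
next
  case (Suc n)
  from Suc.prems obtain f'
    where f: "\<forall>x\<in>S. (f has_derivative f' x) (at x)" "\<forall>v. Ck_on n S (\<lambda>x. f' x v)"
    by auto
  show ?case unfolding Ck_on.simps
    by (rule exI[of _ f']) (use f Suc.prems in \<open>auto intro: has_derivative_transform_within_open\<close>)
qed

lemma bounded_linear_Pair_split:
  assumes "bounded_linear (L :: 'a::real_normed_vector \<times> real \<Rightarrow> real)"
  shows "L (v, w) = L (v, 0) + w * L (0, 1)"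
proof -
  interpret bounded_linear L by fact
  have e: "(v, 0) + w *\<^sub>R (0, 1) = (v, w)" by simp
  have "L ((v, 0) + w *\<^sub>R (0, 1)) = L (v, 0) + w * L (0, 1)" by (simp only: add scale) simp
  then show ?thesis by (simp only: e)
qed

lemma Ck_on_frechet_derivative:
  assumes "open S" "Ck_on (Suc k) S G"
  shows "Ck_on k S (\<lambda>p. frechet_derivative G (at p) v)"
proof -
  from assms(2) obtain G'
    where G: "\<forall>p\<in>S. (G has_derivative G' p) (at p)" "\<forall>v. Ck_on k S (\<lambda>p. G' p v)"
    by auto
  show ?thesis
    by (rule Ck_on_cong[OF assms(1) _ G(2)[rule_format, of v]]) (metis G(1) frechet_derivative_at)
qed

lemma has_derivative_Pair_snd_partial:
  fixes F :: "'a::real_normed_vector \<times> real \<Rightarrow> real"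
  assumes "(F has_derivative F') (at (x, s))"
  shows "((\<lambda>t. F (x, t)) has_real_derivative F' (0, 1)) (at s)"
proof -
  have p: "((\<lambda>t. (x, t)) has_derivative (\<lambda>t. (0, t))) (at s)"
    by (intro has_derivative_Pair has_derivative_const has_derivative_ident)
  have "((F \<circ> (\<lambda>t. (x, t))) has_derivative (F' \<circ> (\<lambda>t. (0, t)))) (at s)"
    by (rule diff_chain_at[OF p assms])
  moreover have "(F' \<circ> (\<lambda>t. (0, t))) = (\<lambda>t. F' (0, 1) * t)"
  proof
    fix t
    interpret bounded_linear F' using assms has_derivative_bounded_linear by blast
    have "F' (0, t) = F' (t *\<^sub>R (0, 1))" by simp
    also have "\<dots> = t * F' (0, 1)" by (simp only: scale) simp
    finally show "(F' \<circ> (\<lambda>t. (0, t))) t = F' (0, 1) * t" by simp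
  qed
  ultimately have "((\<lambda>t. F (x, t)) has_derivative (\<lambda>t. F' (0, 1) * t)) (at s)" unfolding o_def by metis
  then show ?thesis unfolding has_field_derivative_def by assumption
qed

lemma Ck_on_compose_graph:
  fixes G :: "'a::real_normed_vector \<times> real \<Rightarrow> real" and \<phi> :: "'a \<Rightarrow> real"
  assumes "open U" "Ck_on n U G" "Ck_on n UNIV \<phi>" "\<forall>x. (x, \<phi> x) \<in> U"
  shows "Ck_on n UNIV (\<lambda>x. G (x, \<phi> x))"
  using assms(2-4)
proof (induction n arbitrary: G \<phi>)
  case 0
  have "continuous_on UNIV (\<lambda>x. (x, \<phi> x))"
    using 0 by (intro continuous_on_Pair continuous_on_id) simp
  then show ?case
    using continuous_on_compose2[of U G UNIV "\<lambda>x. (x, \<phi> x)"] 0 by auto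
next
  case (Suc n)
  from Suc.prems obtain G'
    where G: "\<forall>p\<in>U. (G has_derivative G' p) (at p)" "\<forall>v. Ck_on n U (\<lambda>p. G' p v)"
    by auto
  from Suc.prems obtain \<phi>'
    where \<phi>: "\<forall>x. (\<phi> has_derivative \<phi>' x) (at x)" "\<forall>v. Ck_on n UNIV (\<lambda>x. \<phi>' x v)"
    by auto
  have \<phi>n: "Ck_on n UNIV \<phi>" using Suc.prems Ck_on_SucD by blast
  have der: "((\<lambda>x. G (x, \<phi> x)) has_derivative
      (\<lambda>v. G' (x, \<phi> x) (v, 0) + \<phi>' x v * G' (x, \<phi> x) (0, 1))) (at x)" for x
  proof -
    have graph: "((\<lambda>x. (x, \<phi> x)) has_derivative (\<lambda>v. (v, \<phi>' x v))) (at x)"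
      using \<phi>(1) by (auto intro!: has_derivative_Pair has_derivative_ident)
    have G_at: "(G has_derivative G' (x, \<phi> x)) (at (x, \<phi> x))" using G(1) Suc.prems(3) by auto
    note split = bounded_linear_Pair_split[OF has_derivative_bounded_linear[OF G_at]]
    from diff_chain_at[OF graph G_at] show ?thesis
      by (simp only: o_def split[of _ "\<phi>' x _"])
  qed
  show ?case unfolding Ck_on.simps
  proof (intro exI[of _ "\<lambda>x v. G' (x, \<phi> x) (v, 0) + \<phi>' x v * G' (x, \<phi> x) (0, 1)"] conjI allI ballI)
    fix v
    have G'_graph: "Ck_on n UNIV (\<lambda>x. G' (x, \<phi> x) w)" for w
      using Suc.IH[of "\<lambda>p. G' p w" \<phi>] G \<phi>n Suc.prems(3) by blast
    show "Ck_on n UNIV (\<lambda>x. G' (x, \<phi> x) (v, 0) + \<phi>' x v * G' (x, \<phi> x) (0, 1))"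
      by (rule Ck_on_add[OF G'_graph Ck_on_mult[OF _ G'_graph]]) (use \<phi> in blast)
  qed (use der in auto)
qed

section \<open>Zeros of functions decreasing in the last variable\<close>

definition upper_half :: "('a \<times> real) set" where
  "upper_half = UNIV \<times> {0<..}"

lemma open_upper_half: "open (upper_half :: ('a::topological_space \<times> real) set)"
  unfolding upper_half_def by (intro open_Times) auto

lemma mem_upper_half_iff: "p \<in> upper_half \<longleftrightarrow> snd p > 0"
  unfolding upper_half_def by (cases p) auto

lemma ex1_pos_zero_of_deriv_neg:
  fixes g :: "real \<Rightarrow> real"
  assumes deriv: "\<And>s. 0 < s \<Longrightarrow> \<exists>d<0. (g has_real_derivative d) (at s)"
    and pos: "0 < a" "g a > 0" and neg: "0 < b" "g b < 0"
  shows "\<exists>!s. s > 0 \<and> g s = 0"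
proof -
  have dec: "g t < g s" if "0 < s" "s < t" for s t
    by (rule DERIV_neg_imp_decreasing[OF that(2)]) (metis deriv less_le_trans that(1))
  have "a \<le> b"
    using dec[of b a] pos neg by (cases "a \<le> b") auto
  moreover have "continuous_on {a..b} g"
  proof (intro continuous_at_imp_continuous_on ballI)
    fix s assume "s \<in> {a..b}"
    with pos have "0 < s" by simp
    with deriv obtain d where "(g has_real_derivative d) (at s)" by blast
    then show "isCont g s" by (rule DERIV_isCont)
  qed
  ultimately obtain s where "a \<le> s" "s \<le> b" "g s = 0"
    using IVT2'[of g b 0 a] pos neg by auto
  moreover have "t = s" if "t > 0" "g t = 0" "s > 0" "g s = 0" for t s
    using dec[of s t] dec[of t s] that by (cases s t rule: linorder_cases) auto
  ultimately show ?thesis using pos by (intro ex1I[of _ s]) auto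
qed

lemma The_pos_eq_of_decreasing:
  fixes g :: "real \<Rightarrow> real"
  assumes dec: "\<And>s t. 0 < s \<Longrightarrow> s < t \<Longrightarrow> g t < g s" and "s0 > 0" "g s0 = c"
  shows "(THE s. s > 0 \<and> g s = c) = s0"
proof (rule the_equality)
  show "s = s0" if "s > 0 \<and> g s = c" for s
    using that assms dec[of s s0] dec[of s0 s] by (cases s s0 rule: linorder_cases) auto
qed (use assms in auto)

lemma implicit_zero_has_derivative:
  fixes G :: "'a::euclidean_space \<times> real \<Rightarrow> real"
  assumes der: "\<And>p. p \<in> upper_half \<Longrightarrow> (G has_derivative G' p) (at p)"
    and dec: "\<And>x s t. 0 < s \<Longrightarrow> s < t \<Longrightarrow> G (x, t) < G (x, s)"
    and zero: "s > 0" "G (x, s) = 0"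
    and nz: "G' (x, s) (0, 1) \<noteq> 0"
  shows "((\<lambda>x. THE s. s > 0 \<and> G (x, s) = 0) has_derivative
           (\<lambda>v. - G' (x, s) (v, 0) / G' (x, s) (0, 1))) (at x)"
proof -
  \<comment> \<open>the zero is the second component of the inverse of the chart (y, t) \<mapsto> (y, G (y, t))\<close>
  define f where "f = (\<lambda>p. (fst p, G p))"
  define g where "g = (\<lambda>q. (fst q, THE s. s > 0 \<and> G (fst q, s) = snd q))"
  define p where "p = (x, s)"
  have pU: "p \<in> upper_half" using zero by (simp add: p_def mem_upper_half_iff)
  define g' where "g' = (\<lambda>w. (fst w, (snd w - G' p (fst w, 0)) / G' p (0, 1)))"
  have bl: "bounded_linear (G' p)" using der[OF pU] has_derivative_bounded_linear by blast
  have "(g has_derivative g') (at (f p))"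
  proof (rule has_derivative_inverse_strong[OF open_upper_half pU])
    have "continuous_on upper_half G"
      using der by (intro continuous_at_imp_continuous_on ballI) (blast dest: has_derivative_continuous)
    then show "continuous_on upper_half f" unfolding f_def
      by (intro continuous_on_Pair continuous_on_fst continuous_on_id)
    show "g (f q) = q" if "q \<in> upper_half" for q
      using that The_pos_eq_of_decreasing[where g = "\<lambda>t. G (fst q, t)", OF dec, of "snd q" "G q"]
      by (simp add: f_def g_def mem_upper_half_iff)
    show "(f has_derivative (\<lambda>v. (fst v, G' p v))) (at p)" unfolding f_def
      by (intro has_derivative_Pair has_derivative_fst[OF has_derivative_ident] der pU)
    show "(\<lambda>v. (fst v, G' p v)) \<circ> g' = id"
    proof (rule ext, clarsimp simp: g'_def)
      fix a b
      have "G' p (a, (b - G' p (a, 0)) / G' p (0, 1))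
          = G' p (a, 0) + (b - G' p (a, 0)) / G' p (0, 1) * G' p (0, 1)"
        by (rule bounded_linear_Pair_split[OF bl])
      also have "\<dots> = b" using nz by (simp add: p_def)
      finally show "G' p (a, (b - G' p (a, 0)) / G' p (0, 1)) = b" .
    qed
  qed
  moreover have "f p = (x, 0)" unfolding f_def p_def using zero by simp
  ultimately have gd: "(g has_derivative g') (at (x, 0))" by simp
  have "((\<lambda>y. (y, 0::real)) has_derivative (\<lambda>v. (v, 0))) (at x)"
    by (intro has_derivative_Pair has_derivative_ident has_derivative_const)
  from has_derivative_snd[OF diff_chain_at[OF this gd]] show ?thesis
    by (simp add: o_def g_def g'_def p_def)
qed

lemma implicit_zero_frechet_derivative:
  fixes G :: "'a::euclidean_space \<times> real \<Rightarrow> real"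
  assumes C1: "Ck_on 1 upper_half G"
    and deriv: "\<And>x s. 0 < s \<Longrightarrow> \<exists>d<0. ((\<lambda>t. G (x, t)) has_real_derivative d) (at s)"
    and zero: "\<And>x. \<exists>s>0. G (x, s) = 0"
    and \<phi>_def: "\<phi> = (\<lambda>x. THE s. s > 0 \<and> G (x, s) = 0)"
    and G'_def: "G' = (\<lambda>p. frechet_derivative G (at p))"
  shows "(x, \<phi> x) \<in> upper_half" and "G' (x, \<phi> x) (0, 1) < 0"
    and "(\<phi> has_derivative (\<lambda>v. - G' (x, \<phi> x) (v, 0) * inverse (G' (x, \<phi> x) (0, 1)))) (at x)"
proof -
  have der: "(G has_derivative G' p) (at p)" if "p \<in> upper_half" for p
  proof -
    from C1 that obtain D where "(G has_derivative D) (at p)" by auto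
    then show ?thesis unfolding G'_def using frechet_derivative_at by metis
  qed
  have nz: "G' p (0, 1) < 0" if "p \<in> upper_half" for p
  proof -
    obtain y s where p: "p = (y, s)" by (cases p)
    with that have "s > 0" by (simp add: mem_upper_half_iff)
    then obtain d where "((\<lambda>t. G (y, t)) has_real_derivative d) (at s)" "d < 0" using deriv by blast
    with has_derivative_Pair_snd_partial[OF der[OF that, unfolded p]] show ?thesis
      using DERIV_unique p by blast
  qed
  have dec: "G (y, t) < G (y, s)" if "0 < s" "s < t" for y s t
    by (rule DERIV_neg_imp_decreasing[OF that(2)]) (metis deriv less_le_trans that(1))
  obtain s where s: "s > 0" "G (x, s) = 0" using zero by blast
  moreover from this have "\<phi> x = s"
    using The_pos_eq_of_decreasing[where g = "\<lambda>t. G (x, t)", OF dec, of s 0] by (simp add: \<phi>_def)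
  ultimately show graph: "(x, \<phi> x) \<in> upper_half" by (simp add: mem_upper_half_iff)
  then show "G' (x, \<phi> x) (0, 1) < 0" by (rule nz)
  from implicit_zero_has_derivative[OF der dec s] nz[OF graph] \<open>\<phi> x = s\<close>
  show "(\<phi> has_derivative (\<lambda>v. - G' (x, \<phi> x) (v, 0) * inverse (G' (x, \<phi> x) (0, 1)))) (at x)"
    by (simp add: \<phi>_def divide_inverse)
qed

lemma Ck_on_implicit_zero:
  fixes G :: "'a::euclidean_space \<times> real \<Rightarrow> real"
  assumes smooth: "Ck_on (Suc k) upper_half G"
    and deriv: "\<And>x s. 0 < s \<Longrightarrow> \<exists>d<0. ((\<lambda>t. G (x, t)) has_real_derivative d) (at s)"
    and zero: "\<And>x. \<exists>s>0. G (x, s) = 0"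
  shows "Ck_on (Suc k) UNIV (\<lambda>x. THE s. s > 0 \<and> G (x, s) = 0)"
proof -
  define \<phi> where "\<phi> = (\<lambda>x. THE s. s > 0 \<and> G (x, s) = 0)"
  define G' where "G' = (\<lambda>p. frechet_derivative G (at p))"
  have "Ck_on 1 upper_half G" by (rule Ck_on_le[OF _ smooth]) simp
  note implicit = implicit_zero_frechet_derivative[OF this deriv zero \<phi>_def G'_def]
  have "Ck_on j UNIV \<phi>" if "j \<le> Suc k" for j
    using that
  proof (induction j)
    case 0
    show ?case using implicit(3)
      by (auto intro!: continuous_at_imp_continuous_on dest: has_derivative_continuous)
  next
    case (Suc j)
    have G'_graph: "Ck_on j UNIV (\<lambda>x. G' (x, \<phi> x) v)" for v
      unfolding G'_def
      using Ck_on_compose_graph[OF open_upper_half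
          Ck_on_frechet_derivative[OF open_upper_half Ck_on_le[OF Suc.prems smooth]] _ allI[OF implicit(1)]]
        Suc by simp
    show ?case unfolding Ck_on.simps
    proof (intro exI[of _ "\<lambda>x v. - G' (x, \<phi> x) (v, 0) * inverse (G' (x, \<phi> x) (0, 1))"] conjI allI ballI)
      show "(\<phi> has_derivative (\<lambda>v. - G' (x, \<phi> x) (v, 0) * inverse (G' (x, \<phi> x) (0, 1)))) (at x)" for x
        by (rule implicit(3))
      show "Ck_on j UNIV (\<lambda>x. - G' (x, \<phi> x) (v, 0) * inverse (G' (x, \<phi> x) (0, 1)))" for v
        using implicit(2) by (intro Ck_on_mult Ck_on_minus Ck_on_inverse G'_graph) (auto simp: less_imp_neq)
    qed
  qed
  then show ?thesis unfolding \<phi>_def by blast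
qed

section \<open>Parametric integrals\<close>

lemma tendsto_integral_dominated:
  fixes h :: "'p::first_countable_topology \<Rightarrow> 'm \<Rightarrow> real"
  assumes "finite_measure M"
    and bound: "\<forall>\<^sub>F q in at p within S. h q \<in> borel_measurable M \<and> (\<forall>y\<in>space M. \<bar>h q y\<bar> \<le> B)"
    and lim: "AE y in M. ((\<lambda>q. h q y) \<longlongrightarrow> g y) (at p within S)"
    and "g \<in> borel_measurable M"
  shows "((\<lambda>q. \<integral>y. h q y \<partial>M) \<longlongrightarrow> (\<integral>y. g y \<partial>M)) (at p within S)"
  unfolding tendsto_at_iff_sequentially
proof (intro allI impI)
  interpret finite_measure M by fact
  fix X :: "nat \<Rightarrow> 'p" assume X: "\<forall>i. X i \<in> S - {p}" "X \<longlonglongrightarrow> p"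
  then have X_lim: "filterlim X (at p within S) sequentially"
    by (auto simp: filterlim_at)
  from filterlim_iff[THEN iffD1, OF X_lim, rule_format, OF bound]
  obtain N where N: "\<And>n. N \<le> n \<Longrightarrow> h (X n) \<in> borel_measurable M \<and> (\<forall>y\<in>space M. \<bar>h (X n) y\<bar> \<le> B)"
    by (auto simp: eventually_sequentially)
  have "(\<lambda>n. \<integral>y. h (X (n + N)) y \<partial>M) \<longlonglongrightarrow> (\<integral>y. g y \<partial>M)"
  proof (rule integral_dominated_convergence[where w = "\<lambda>_. B"])
    show "AE y in M. (\<lambda>n. h (X (n + N)) y) \<longlonglongrightarrow> g y"
      using lim
    proof eventually_elim
      case (elim y)
      from filterlim_compose[OF elim X_lim] show ?case
        by (intro LIMSEQ_ignore_initial_segment) (simp add: o_def)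
    qed
    show "AE y in M. norm (h (X (n + N)) y) \<le> B" for n
      using N[of "n + N"] by (auto intro!: AE_I2)
  qed (use N \<open>g \<in> borel_measurable M\<close> in auto)
  then show "((\<lambda>q. \<integral>y. h q y \<partial>M) \<circ> X) \<longlonglongrightarrow> (\<integral>y. g y \<partial>M)"
    unfolding o_def by (rule LIMSEQ_offset)
qed

lemma (in finite_measure) bounded_linear_integral:
  fixes h :: "'a \<Rightarrow> 'v::real_normed_vector \<Rightarrow> real"
  assumes lin: "\<And>y. y \<in> space M \<Longrightarrow> linear (h y)"
    and bound: "\<And>y v. y \<in> space M \<Longrightarrow> \<bar>h y v\<bar> \<le> C * norm v"
    and meas: "\<And>v. (\<lambda>y. h y v) \<in> borel_measurable M"
  shows "bounded_linear (\<lambda>v. \<integral>y. h y v \<partial>M)"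
proof -
  have int: "integrable M (\<lambda>y. h y v)" for v
    by (rule integrable_const_bound[where B = "C * norm v"]) (use bound meas in auto)
  show ?thesis
  proof (rule bounded_linear_intro[where K = "C * measure M (space M)"])
    fix a b
    have "(\<integral>y. h y (a + b) \<partial>M) = (\<integral>y. h y a + h y b \<partial>M)"
      by (rule Bochner_Integration.integral_cong) (auto simp: linear_add[OF lin])
    then show "(\<integral>y. h y (a + b) \<partial>M) = (\<integral>y. h y a \<partial>M) + (\<integral>y. h y b \<partial>M)"
      using int by simp
  next
    fix r a
    have "(\<integral>y. h y (r *\<^sub>R a) \<partial>M) = (\<integral>y. r * h y a \<partial>M)"
      by (rule Bochner_Integration.integral_cong) (auto simp: linear_scale[OF lin])
    then show "(\<integral>y. h y (r *\<^sub>R a) \<partial>M) = r *\<^sub>R (\<integral>y. h y a \<partial>M)" by simp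
  next
    fix a
    have "norm (\<integral>y. h y a \<partial>M) \<le> (\<integral>y. norm (h y a) \<partial>M)"
      by (rule Bochner_Integration.integral_norm_bound)
    also have "\<dots> \<le> (\<integral>y. C * norm a \<partial>M)"
      by (rule Bochner_Integration.integral_mono) (use int bound in auto)
    finally show "norm (\<integral>y. h y a \<partial>M) \<le> norm a * (C * measure M (space M))"
      by (simp add: mult_ac)
  qed
qed

lemma abs_diff_le_of_derivative_bound_ball:
  fixes g :: "'p::{real_normed_vector, perfect_space} \<Rightarrow> real"
  assumes der: "\<And>q. q \<in> ball p e \<Longrightarrow> (g has_derivative g' q) (at q)"
    and bound: "\<And>q v. q \<in> ball p e \<Longrightarrow> \<bar>g' q v\<bar> \<le> C * norm v"
    and q: "q \<in> ball p e"
  shows "\<bar>g q - g p\<bar> \<le> C * norm (q - p)"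
proof -
  have "norm (g q - g p) \<le> C * norm (q - p)"
  proof (rule differentiable_bound[of "ball p e" g g'])
    show "(g has_derivative g' q) (at q within ball p e)" if "q \<in> ball p e" for q
      using der[OF that] by (rule has_derivative_at_withinI)
    show "onorm (g' q) \<le> C" if "q \<in> ball p e" for q
      using bound[OF that] by (intro onorm_le) simp
  qed (use q in \<open>auto intro: le_less_trans[OF zero_le_dist]\<close>)
  then show ?thesis by simp
qed

lemma (in finite_measure) tendsto_integral_difference_quotient:
  fixes h :: "'p::euclidean_space \<Rightarrow> 'a \<Rightarrow> real"
  assumes C: "0 \<le> C"
    and der: "\<And>q y. q \<in> ball p e \<Longrightarrow> y \<in> space M \<Longrightarrow> ((\<lambda>q. h q y) has_derivative h' q y) (at q)"
    and bound: "\<And>q y v. q \<in> ball p e \<Longrightarrow> y \<in> space M \<Longrightarrow> \<bar>h' q y v\<bar> \<le> C * norm v"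
    and meas: "\<And>q. q \<in> ball p e \<Longrightarrow> h q \<in> borel_measurable M"
    and meas': "\<And>v. (\<lambda>y. h' p y v) \<in> borel_measurable M"
    and p: "p \<in> ball p e"
  shows "((\<lambda>q. \<integral>y. \<bar>h q y - h p y - h' p y (q - p)\<bar> / norm (q - p) \<partial>M) \<longlongrightarrow> 0) (at p)"
proof -
  define quot where "quot q y = \<bar>h q y - h p y - h' p y (q - p)\<bar> / norm (q - p)" for q y
  have "((\<lambda>q. \<integral>y. quot q y \<partial>M) \<longlongrightarrow> (\<integral>y. 0 \<partial>M)) (at p)"
  proof (rule tendsto_integral_dominated[OF finite_measure_axioms, where B = "2 * C"])
    have "\<forall>\<^sub>F q in at p. q \<in> ball p e"
      using p by (auto simp: eventually_at dist_commute intro!: exI[of _ e])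
    then show "\<forall>\<^sub>F q in at p. quot q \<in> borel_measurable M \<and> (\<forall>y\<in>space M. \<bar>quot q y\<bar> \<le> 2 * C)"
    proof eventually_elim
      case (elim q)
      have "\<bar>quot q y\<bar> \<le> 2 * C" if y: "y \<in> space M" for y
      proof (cases "q = p")
        case False
        have "\<bar>h q y - h p y - h' p y (q - p)\<bar> \<le> \<bar>h q y - h p y\<bar> + \<bar>h' p y (q - p)\<bar>" by simp
        also have "\<dots> \<le> 2 * C * norm (q - p)"
          using abs_diff_le_of_derivative_bound_ball[OF der[OF _ y] bound[OF _ y] elim]
            bound[OF p y, of "q - p"] by simp
        finally show ?thesis using False by (simp add: quot_def divide_le_eq)
      qed (use C in \<open>simp add: quot_def\<close>)
      moreover have "quot q \<in> borel_measurable M" unfolding quot_def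
        using meas[OF elim] meas[OF p] meas'[of "q - p"] by measurable
      ultimately show ?case by blast
    qed
    show "AE y in M. ((\<lambda>q. quot q y) \<longlongrightarrow> 0) (at p)"
    proof (rule AE_I2)
      fix y assume "y \<in> space M"
      from der[OF p this] show "((\<lambda>q. quot q y) \<longlongrightarrow> 0) (at p)"
        unfolding has_derivative_iff_norm quot_def by simp
    qed
  qed simp
  then show ?thesis by (simp add: quot_def)
qed

lemma (in finite_measure) has_derivative_integral:
  fixes h :: "'p::euclidean_space \<Rightarrow> 'a \<Rightarrow> real"
  assumes e: "0 < e" and C: "0 \<le> C"
    and der: "\<And>q y. q \<in> ball p e \<Longrightarrow> y \<in> space M \<Longrightarrow> ((\<lambda>q. h q y) has_derivative h' q y) (at q)"
    and bound: "\<And>q y v. q \<in> ball p e \<Longrightarrow> y \<in> space M \<Longrightarrow> \<bar>h' q y v\<bar> \<le> C * norm v"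
    and meas: "\<And>q. q \<in> ball p e \<Longrightarrow> h q \<in> borel_measurable M"
    and meas': "\<And>v. (\<lambda>y. h' p y v) \<in> borel_measurable M"
    and int: "integrable M (h p)"
  shows "((\<lambda>q. \<integral>y. h q y \<partial>M) has_derivative (\<lambda>v. \<integral>y. h' p y v \<partial>M)) (at p)"
proof -
  have p: "p \<in> ball p e" using e by simp
  have int_q: "integrable M (h q)" if q: "q \<in> ball p e" for q
  proof (rule Bochner_Integration.integrable_bound[where f = "\<lambda>y. \<bar>h p y\<bar> + C * norm (q - p)"])
    show "AE y in M. norm (h q y) \<le> norm (\<bar>h p y\<bar> + C * norm (q - p))"
      using abs_diff_le_of_derivative_bound_ball[OF der bound q] by (intro AE_I2) force
  qed (use int meas q in auto)
  have int': "integrable M (\<lambda>y. h' p y v)" for v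
    by (rule integrable_const_bound[where B = "C * norm v"]) (use bound[OF p] meas' in auto)
  have "\<forall>\<^sub>F q in at p. q \<in> ball p e"
    using e by (auto simp: eventually_at dist_commute intro!: exI[of _ e])
  then have "\<forall>\<^sub>F q in at p. norm ((\<integral>y. h q y \<partial>M) - (\<integral>y. h p y \<partial>M) - (\<integral>y. h' p y (q - p) \<partial>M)) / norm (q - p)
      \<le> (\<integral>y. \<bar>h q y - h p y - h' p y (q - p)\<bar> / norm (q - p) \<partial>M)"
  proof eventually_elim
    case (elim q)
    have "(\<integral>y. h q y \<partial>M) - (\<integral>y. h p y \<partial>M) - (\<integral>y. h' p y (q - p) \<partial>M)
        = (\<integral>y. h q y - h p y - h' p y (q - p) \<partial>M)"
      using int_q[OF elim] int int' by simp
    also have "norm \<dots> \<le> (\<integral>y. norm (h q y - h p y - h' p y (q - p)) \<partial>M)"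
      by (rule Bochner_Integration.integral_norm_bound)
    finally show ?case by (simp add: divide_right_mono)
  qed
  moreover have "bounded_linear (\<lambda>v. \<integral>y. h' p y v \<partial>M)"
    using der[OF p] bound[OF p] meas' by (intro bounded_linear_integral has_derivative_linear) auto
  ultimately show ?thesis unfolding has_derivative_iff_norm
    using tendsto_integral_difference_quotient[OF C der bound meas meas' p]
    by (auto intro: tendsto_sandwich[OF _ _ tendsto_const])
qed

section \<open>Gaussian integrals\<close>

definition poly_growth_near :: "('a::real_normed_vector \<times> real \<Rightarrow> 'a \<Rightarrow> real) \<Rightarrow> 'a \<times> real \<Rightarrow> bool" where
  "poly_growth_near q p \<longleftrightarrow>
     (\<exists>C N. \<forall>\<^sub>F p' in nhds p. \<forall>y. \<bar>q p' y\<bar> \<le> C * (1 + norm (fst p' - y)) ^ N)"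

text \<open>The polynomial growth in |x - y| of an amplitude q (x, \<sigma>) y and of its (x, \<sigma>)-derivatives
  is absorbed by the Gaussian factor; this is what makes its Gaussian integral C^n.\<close>

fun Ck_poly_growth :: "nat \<Rightarrow> ('a::real_normed_vector \<times> real \<Rightarrow> 'a \<Rightarrow> real) \<Rightarrow> bool" where
  "Ck_poly_growth 0 q \<longleftrightarrow>
     (\<forall>y. continuous_on upper_half (\<lambda>p. q p y)) \<and>
     (\<forall>p\<in>upper_half. q p \<in> borel_measurable borel \<and> poly_growth_near q p)"
| "Ck_poly_growth (Suc n) q \<longleftrightarrow> Ck_poly_growth 0 q \<and>
     (\<exists>q'. (\<forall>p\<in>upper_half. \<forall>y. ((\<lambda>p. q p y) has_derivative q' p y) (at p)) \<and>
           (\<forall>v. Ck_poly_growth n (\<lambda>p y. q' p y v)))"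

lemma Ck_poly_growth_SucD: "Ck_poly_growth (Suc n) q \<Longrightarrow> Ck_poly_growth n q"
proof (induction n arbitrary: q)
  case (Suc n)
  then show ?case by (metis Ck_poly_growth.simps(2))
qed simp

lemma Ck_poly_growth_0: "Ck_poly_growth n q \<Longrightarrow> Ck_poly_growth 0 q"
  by (cases n) auto

lemma poly_growth_near_add:
  assumes "poly_growth_near f p" "poly_growth_near g p"
  shows "poly_growth_near (\<lambda>p y. f p y + g p y) p"
proof -
  obtain C1 N1 C2 N2
    where "\<forall>\<^sub>F p' in nhds p. \<forall>y. \<bar>f p' y\<bar> \<le> C1 * (1 + norm (fst p' - y)) ^ N1"
      and "\<forall>\<^sub>F p' in nhds p. \<forall>y. \<bar>g p' y\<bar> \<le> C2 * (1 + norm (fst p' - y)) ^ N2"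
    using assms unfolding poly_growth_near_def by blast
  then have "\<forall>\<^sub>F p' in nhds p. \<forall>y. \<bar>f p' y + g p' y\<bar> \<le> (\<bar>C1\<bar> + \<bar>C2\<bar>) * (1 + norm (fst p' - y)) ^ (N1 + N2)"
  proof eventually_elim
    case (elim p')
    show ?case
    proof
      fix y
      define r where "r = 1 + norm (fst p' - y)"
      have "r \<ge> 1" by (simp add: r_def)
      then have "r ^ N1 \<le> r ^ (N1 + N2)" "r ^ N2 \<le> r ^ (N1 + N2)"
        by (auto intro!: power_increasing)
      then have "C1 * r ^ N1 \<le> \<bar>C1\<bar> * r ^ (N1 + N2)" "C2 * r ^ N2 \<le> \<bar>C2\<bar> * r ^ (N1 + N2)"
        using \<open>r \<ge> 1\<close> by (smt (verit) mult_left_mono mult_right_mono zero_le_power abs_ge_zero)+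
      moreover have "\<bar>f p' y\<bar> \<le> C1 * r ^ N1" "\<bar>g p' y\<bar> \<le> C2 * r ^ N2"
        using elim by (simp_all add: r_def)
      ultimately show "\<bar>f p' y + g p' y\<bar> \<le> (\<bar>C1\<bar> + \<bar>C2\<bar>) * r ^ (N1 + N2)"
        by (simp add: distrib_right)
    qed
  qed
  then show ?thesis unfolding poly_growth_near_def by blast
qed

lemma poly_growth_near_mult:
  assumes "poly_growth_near f p" "poly_growth_near g p"
  shows "poly_growth_near (\<lambda>p y. f p y * g p y) p"
proof -
  obtain C1 N1 C2 N2
    where "\<forall>\<^sub>F p' in nhds p. \<forall>y. \<bar>f p' y\<bar> \<le> C1 * (1 + norm (fst p' - y)) ^ N1"
      and "\<forall>\<^sub>F p' in nhds p. \<forall>y. \<bar>g p' y\<bar> \<le> C2 * (1 + norm (fst p' - y)) ^ N2"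
    using assms unfolding poly_growth_near_def by blast
  then have "\<forall>\<^sub>F p' in nhds p. \<forall>y. \<bar>f p' y * g p' y\<bar> \<le> (C1 * C2) * (1 + norm (fst p' - y)) ^ (N1 + N2)"
  proof eventually_elim
    case (elim p')
    show ?case
    proof
      fix y
      have "\<bar>f p' y * g p' y\<bar> \<le> (C1 * (1 + norm (fst p' - y)) ^ N1) * (C2 * (1 + norm (fst p' - y)) ^ N2)"
        unfolding abs_mult using elim by (intro mult_mono) (auto intro: order_trans[OF abs_ge_zero])
      then show "\<bar>f p' y * g p' y\<bar> \<le> (C1 * C2) * (1 + norm (fst p' - y)) ^ (N1 + N2)"
        by (simp add: power_add mult_ac)
    qed
  qed
  then show ?thesis unfolding poly_growth_near_def by blast
qed

lemma Ck_poly_growth_0_add: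
  assumes "Ck_poly_growth 0 f" "Ck_poly_growth 0 g"
  shows "Ck_poly_growth 0 (\<lambda>p y. f p y + g p y)"
  using assms unfolding Ck_poly_growth.simps
  by (auto intro!: continuous_on_add borel_measurable_add poly_growth_near_add)

lemma Ck_poly_growth_0_mult:
  assumes "Ck_poly_growth 0 f" "Ck_poly_growth 0 g"
  shows "Ck_poly_growth 0 (\<lambda>p y. f p y * g p y)"
  using assms unfolding Ck_poly_growth.simps
  by (auto intro!: continuous_on_mult borel_measurable_times poly_growth_near_mult)

lemma Ck_poly_growth_add:
  "Ck_poly_growth n f \<Longrightarrow> Ck_poly_growth n g \<Longrightarrow> Ck_poly_growth n (\<lambda>p y. f p y + g p y)"
proof (induction n arbitrary: f g)
  case 0
  then show ?case by (rule Ck_poly_growth_0_add)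
next
  case (Suc n)
  from Suc.prems obtain f' g'
    where f: "\<forall>p\<in>upper_half. \<forall>y. ((\<lambda>p. f p y) has_derivative f' p y) (at p)"
        "\<forall>v. Ck_poly_growth n (\<lambda>p y. f' p y v)"
      and g: "\<forall>p\<in>upper_half. \<forall>y. ((\<lambda>p. g p y) has_derivative g' p y) (at p)"
        "\<forall>v. Ck_poly_growth n (\<lambda>p y. g' p y v)"
    by auto
  show ?case unfolding Ck_poly_growth.simps(2)
  proof (intro conjI exI[of _ "\<lambda>p y v. f' p y v + g' p y v"] allI ballI)
    show "Ck_poly_growth 0 (\<lambda>p y. f p y + g p y)"
      using Suc.prems by (intro Ck_poly_growth_0_add) auto
    show "Ck_poly_growth n (\<lambda>p y. f' p y v + g' p y v)" for v
      using f g Suc.IH by blast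
    show "((\<lambda>p. f p y + g p y) has_derivative (\<lambda>v. f' p y v + g' p y v)) (at p)"
      if "p \<in> upper_half" for p y
      using f g that by (auto intro: has_derivative_add)
  qed
qed

lemma Ck_poly_growth_mult:
  "Ck_poly_growth n f \<Longrightarrow> Ck_poly_growth n g \<Longrightarrow> Ck_poly_growth n (\<lambda>p y. f p y * g p y)"
proof (induction n arbitrary: f g)
  case 0
  then show ?case by (rule Ck_poly_growth_0_mult)
next
  case (Suc n)
  from Suc.prems obtain f' g'
    where f: "\<forall>p\<in>upper_half. \<forall>y. ((\<lambda>p. f p y) has_derivative f' p y) (at p)"
        "\<forall>v. Ck_poly_growth n (\<lambda>p y. f' p y v)"
      and g: "\<forall>p\<in>upper_half. \<forall>y. ((\<lambda>p. g p y) has_derivative g' p y) (at p)"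
        "\<forall>v. Ck_poly_growth n (\<lambda>p y. g' p y v)"
    by auto
  have fn: "Ck_poly_growth n f" and gn: "Ck_poly_growth n g"
    using Suc.prems Ck_poly_growth_SucD by blast+
  show ?case unfolding Ck_poly_growth.simps(2)
  proof (intro conjI exI[of _ "\<lambda>p y v. f p y * g' p y v + f' p y v * g p y"] allI ballI)
    show "Ck_poly_growth 0 (\<lambda>p y. f p y * g p y)"
      using Suc.prems by (intro Ck_poly_growth_0_mult) auto
    show "Ck_poly_growth n (\<lambda>p y. f p y * g' p y v + f' p y v * g p y)" for v
      by (intro Ck_poly_growth_add Suc.IH fn gn f(2)[rule_format] g(2)[rule_format])
    show "((\<lambda>p. f p y * g p y) has_derivative (\<lambda>v. f p y * g' p y v + f' p y v * g p y)) (at p)"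
      if "p \<in> upper_half" for p y
      using f g that by (auto intro: has_derivative_mult)
  qed
qed

lemma Ck_poly_growth_const: "Ck_poly_growth n (\<lambda>p y. c)"
proof (induction n arbitrary: c)
  have const0: "Ck_poly_growth 0 (\<lambda>p y. c)" for c :: real
    unfolding Ck_poly_growth.simps poly_growth_near_def
    by (intro conjI allI ballI exI[of _ "\<bar>c\<bar>"] exI[of _ "0::nat"] always_eventually) auto
  case 0
  show ?case by (rule const0)
  case (Suc n)
  show ?case unfolding Ck_poly_growth.simps(2)
    by (intro conjI exI[of _ "\<lambda>p y v. 0"] ballI allI has_derivative_const const0 Suc)
qed

lemma Ck_poly_growth_minus: "Ck_poly_growth n f \<Longrightarrow> Ck_poly_growth n (\<lambda>p y. - f p y)"
  using Ck_poly_growth_mult[OF Ck_poly_growth_const[of n "-1"], of f] by simp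

lemma Ck_poly_growth_diff:
  "Ck_poly_growth n f \<Longrightarrow> Ck_poly_growth n g \<Longrightarrow> Ck_poly_growth n (\<lambda>p y. f p y - g p y)"
  unfolding diff_conv_add_uminus by (rule Ck_poly_growth_add[OF _ Ck_poly_growth_minus])

lemma Ck_poly_growth_power: "Ck_poly_growth n f \<Longrightarrow> Ck_poly_growth n (\<lambda>p y. f p y ^ k)"
  by (induction k) (simp_all add: Ck_poly_growth_const Ck_poly_growth_mult)

lemma Ck_poly_growth_inner: "Ck_poly_growth n (\<lambda>p y. inner (fst p - y) u)"
proof -
  have "\<bar>inner (x - y) u\<bar> \<le> norm u * (1 + norm (x - y)) ^ 1" for x y :: 'a
  proof -
    have "\<bar>inner (x - y) u\<bar> \<le> norm (x - y) * norm u" by (rule Cauchy_Schwarz_ineq2)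
    also have "\<dots> \<le> norm u * (1 + norm (x - y))" by (simp add: algebra_simps)
    finally show ?thesis by simp
  qed
  then have inner0: "Ck_poly_growth 0 (\<lambda>p y. inner (fst p - y) u)"
    unfolding Ck_poly_growth.simps poly_growth_near_def
    by (intro conjI allI ballI exI[of _ "norm u"] exI[of _ 1] always_eventually)
      (auto intro!: continuous_intros borel_measurable_continuous_onI)
  show ?thesis
  proof (cases n)
    case (Suc m)
    show ?thesis unfolding Suc Ck_poly_growth.simps(2)
    proof (intro conjI allI ballI exI[of _ "\<lambda>p y v. inner (fst v) u"] inner0 Ck_poly_growth_const)
      show "((\<lambda>p. inner (fst p - y) u) has_derivative (\<lambda>v. inner (fst v) u)) (at p)" for p :: "'a \<times> real" and y
        by (auto intro!: derivative_eq_intros)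
    qed
  qed (use inner0 in simp)
qed

definition sq_dist :: "'a::real_normed_vector \<times> real \<Rightarrow> 'a \<Rightarrow> real" where
  "sq_dist p y = (norm (fst p - y))\<^sup>2"

lemma has_derivative_sq_dist:
  "((\<lambda>p. sq_dist p y) has_derivative (\<lambda>v. 2 * inner (fst p - y) (fst v))) (at p)"
  unfolding sq_dist_def power2_norm_eq_inner
  by (auto intro!: derivative_eq_intros simp: inner_commute)

lemma Ck_poly_growth_sq_dist: "Ck_poly_growth n (sq_dist :: 'a::real_inner \<times> real \<Rightarrow> 'a \<Rightarrow> real)"
proof -
  have "\<bar>(norm (x - y))\<^sup>2\<bar> \<le> 1 * (1 + norm (x - y)) ^ 2" for x y :: 'a
    by (simp add: power2_eq_square algebra_simps)
  then have sq_dist0: "Ck_poly_growth 0 sq_dist"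
    unfolding Ck_poly_growth.simps poly_growth_near_def sq_dist_def
    by (intro conjI allI ballI exI[of _ "1::real"] exI[of _ "2::nat"] always_eventually)
      (auto intro!: continuous_intros borel_measurable_continuous_onI)
  show ?thesis
  proof (cases n)
    case (Suc m)
    show ?thesis unfolding Suc Ck_poly_growth.simps(2)
      by (intro conjI allI ballI exI[of _ "\<lambda>p y (v :: 'a \<times> real). 2 * inner (fst p - y) (fst v)"] sq_dist0
          Ck_poly_growth_mult Ck_poly_growth_const Ck_poly_growth_inner has_derivative_sq_dist)
  qed (use sq_dist0 in simp)
qed

lemma Ck_poly_growth_inverse_snd: "Ck_poly_growth n (\<lambda>p y. inverse (snd p))"
proof (induction n)
  case 0
  show ?case unfolding Ck_poly_growth.simps
  proof (intro conjI allI ballI)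
    show "continuous_on upper_half (\<lambda>p::'a \<times> real. inverse (snd p))"
      by (intro continuous_on_inverse continuous_on_snd continuous_on_id)
        (auto simp: mem_upper_half_iff)
    fix p :: "'a \<times> real" assume "p \<in> upper_half"
    then have s: "snd p > 0" by (simp add: mem_upper_half_iff)
    have "((\<lambda>p'. snd p') \<longlongrightarrow> snd p) (nhds p)"
      by (intro tendsto_snd) (auto intro: filterlim_ident)
    then have "\<forall>\<^sub>F p' in nhds p. snd p / 2 < snd p'"
      by (rule order_tendstoD) (use s in simp)
    then have "\<forall>\<^sub>F p' in nhds p. \<forall>y::'a. \<bar>inverse (snd p')\<bar> \<le> (2 / snd p) * (1 + norm (fst p' - y)) ^ 0"
      by eventually_elim (use s in \<open>simp add: field_simps\<close>)
    then show "poly_growth_near (\<lambda>p y. inverse (snd p)) p"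
      unfolding poly_growth_near_def by blast
  qed simp
next
  case (Suc n)
  have "Ck_poly_growth 0 (\<lambda>p y::'a. inverse (snd p))" using Suc Ck_poly_growth_0 by blast
  then show ?case unfolding Ck_poly_growth.simps(2)
  proof (intro conjI allI ballI exI[of _ "\<lambda>p y v. - snd v * (inverse (snd p) * inverse (snd p))"]
      Ck_poly_growth_mult Ck_poly_growth_const Suc)
    fix p :: "'a \<times> real" and y :: 'a assume "p \<in> upper_half"
    then have "snd p \<noteq> 0" by (simp add: mem_upper_half_iff)
    then show "((\<lambda>p. inverse (snd p)) has_derivative (\<lambda>v. - snd v * (inverse (snd p) * inverse (snd p)))) (at p)"
      by (auto intro!: derivative_eq_intros simp: field_simps)
  qed
qed

definition gauss_kernel :: "'a::real_normed_vector \<times> real \<Rightarrow> 'a \<Rightarrow> real" where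
  "gauss_kernel p y = exp (- sq_dist p y / (2 * (snd p)\<^sup>2))"

definition gauss_kernel_log_deriv :: "'a::real_inner \<times> real \<Rightarrow> 'a \<Rightarrow> 'a \<times> real \<Rightarrow> real" where
  "gauss_kernel_log_deriv p y v =
     - inner (fst p - y) (fst v) * inverse (snd p) ^ 2 + snd v * sq_dist p y * inverse (snd p) ^ 3"

lemma gauss_kernel_pos: "gauss_kernel p y > 0"
  by (simp add: gauss_kernel_def)

lemma has_derivative_gauss_kernel:
  assumes "p \<in> upper_half"
  shows "((\<lambda>p. gauss_kernel p y) has_derivative
           (\<lambda>v. gauss_kernel p y * gauss_kernel_log_deriv p y v)) (at p)"
proof -
  from assms have "snd p \<noteq> 0" by (simp add: mem_upper_half_iff)
  then show ?thesis
    unfolding gauss_kernel_def gauss_kernel_log_deriv_def sq_dist_def power2_norm_eq_inner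
    by (auto intro!: derivative_eq_intros simp: field_simps inner_commute power2_eq_square power3_eq_cube)
qed

lemma Ck_poly_growth_gauss_kernel_log_deriv:
  "Ck_poly_growth n (\<lambda>p y. gauss_kernel_log_deriv p y v)"
  unfolding gauss_kernel_log_deriv_def
  by (intro Ck_poly_growth_add Ck_poly_growth_mult Ck_poly_growth_minus Ck_poly_growth_power
      Ck_poly_growth_const Ck_poly_growth_inner Ck_poly_growth_sq_dist Ck_poly_growth_inverse_snd)

lemma poly_times_gauss_le:
  fixes r c :: real
  assumes "c > 0" "r \<ge> 0"
  shows "(1 + r) ^ N * exp (- c * r\<^sup>2) \<le> exp ((real N)\<^sup>2 / (4 * c))"
proof -
  have "(1 + r) ^ N \<le> exp r ^ N" using assms by (intro power_mono) auto
  also have "\<dots> = exp (real N * r)" by (simp add: exp_of_nat_mult)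
  finally have "(1 + r) ^ N * exp (- c * r\<^sup>2) \<le> exp (real N * r) * exp (- c * r\<^sup>2)"
    by (intro mult_right_mono) auto
  also have "\<dots> = exp (real N * r - c * r\<^sup>2)" by (simp add: exp_add[symmetric])
  also have "real N * r - c * r\<^sup>2 \<le> (real N)\<^sup>2 / (4 * c)"
  proof -
    have "0 \<le> c * (r - real N / (2 * c))\<^sup>2" using assms by simp
    also have "\<dots> = c * r\<^sup>2 - real N * r + (real N)\<^sup>2 / (4 * c)"
      using assms by (simp add: power2_eq_square field_simps)
    finally show ?thesis by simp
  qed
  finally show ?thesis by simp
qed

lemma gauss_integrand_bounded_near:
  assumes "Ck_poly_growth 0 q" "p \<in> upper_half"
  shows "\<exists>B. \<forall>\<^sub>F p' in nhds p. \<forall>y. \<bar>q p' y * gauss_kernel p' y\<bar> \<le> B"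
proof -
  from assms obtain C N where CN: "\<forall>\<^sub>F p' in nhds p. \<forall>y. \<bar>q p' y\<bar> \<le> C * (1 + norm (fst p' - y)) ^ N"
    by (auto simp: poly_growth_near_def)
  from assms have s: "snd p > 0" by (simp add: mem_upper_half_iff)
  have "((\<lambda>p'. snd p') \<longlongrightarrow> snd p) (nhds p)"
    by (intro tendsto_snd) (auto intro: filterlim_ident)
  then have near: "\<forall>\<^sub>F p' in nhds p. 0 < snd p' \<and> snd p' < 2 * snd p"
    using s by (intro eventually_conj order_tendstoD) auto
  define c where "c = 1 / (8 * (snd p)\<^sup>2)"
  have c: "c > 0" using s by (simp add: c_def)
  have "\<forall>\<^sub>F p' in nhds p. \<forall>y. \<bar>q p' y * gauss_kernel p' y\<bar> \<le> \<bar>C\<bar> * exp ((real N)\<^sup>2 / (4 * c))"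
    using CN near
  proof eventually_elim
    case (elim p')
    show ?case
    proof
      fix y
      define r where "r = norm (fst p' - y)"
      have r: "r \<ge> 0" by (simp add: r_def)
      have "(snd p')\<^sup>2 \<le> (2 * snd p)\<^sup>2" using elim by (intro power_mono) auto
      then have "r\<^sup>2 / (2 * (2 * snd p)\<^sup>2) \<le> r\<^sup>2 / (2 * (snd p')\<^sup>2)"
        using elim by (intro divide_left_mono mult_pos_pos) auto
      then have K: "gauss_kernel p' y \<le> exp (- c * r\<^sup>2)"
        unfolding gauss_kernel_def sq_dist_def r_def[symmetric] c_def
        by (simp add: power2_eq_square field_simps)
      have "\<bar>q p' y * gauss_kernel p' y\<bar> \<le> (\<bar>C\<bar> * (1 + r) ^ N) * exp (- c * r\<^sup>2)"
        unfolding abs_mult using elim K gauss_kernel_pos[of p' y] r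
        by (intro mult_mono) (auto simp: r_def intro: order_trans[OF _ mult_right_mono[OF abs_ge_self]])
      also have "\<dots> \<le> \<bar>C\<bar> * exp ((real N)\<^sup>2 / (4 * c))"
        unfolding mult.assoc by (intro mult_left_mono poly_times_gauss_le c r) auto
      finally show "\<bar>q p' y * gauss_kernel p' y\<bar> \<le> \<bar>C\<bar> * exp ((real N)\<^sup>2 / (4 * c))" .
    qed
  qed
  then show ?thesis by blast
qed

lemma linear_abs_le_Basis_sum:
  fixes f :: "'b::euclidean_space \<Rightarrow> real"
  assumes "linear f" and bound: "\<And>b. b \<in> Basis \<Longrightarrow> \<bar>f b\<bar> \<le> B b"
  shows "\<bar>f v\<bar> \<le> (\<Sum>b\<in>Basis. B b) * norm v"
proof -
  have "f v = f (\<Sum>b\<in>Basis. (v \<bullet> b) *\<^sub>R b)" by (simp add: euclidean_representation)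
  also have "\<dots> = (\<Sum>b\<in>Basis. (v \<bullet> b) * f b)"
    using assms by (simp add: linear_sum linear_scale)
  finally have "\<bar>f v\<bar> \<le> (\<Sum>b\<in>Basis. \<bar>(v \<bullet> b) * f b\<bar>)"
    by (simp only: sum_abs)
  also have "\<dots> \<le> (\<Sum>b\<in>Basis. norm v * B b)"
    unfolding abs_mult using bound Basis_le_norm
    by (intro sum_mono mult_mono) (auto intro: order_trans[OF abs_ge_zero])
  finally show ?thesis by (simp add: sum_distrib_left mult.commute)
qed

locale finite_borel_measure = finite_measure M for M :: "'a::euclidean_space measure" +
  assumes sets_eq_borel: "sets M = sets borel"
begin

lemma space_eq_UNIV: "space M = UNIV"
  using sets_eq_imp_space_eq[OF sets_eq_borel] by simp

lemma measurable_from_borel: "f \<in> borel_measurable borel \<Longrightarrow> f \<in> borel_measurable M"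
  using measurable_cong_sets[OF sets_eq_borel refl] by blast

definition gauss_integral :: "('a \<times> real \<Rightarrow> 'a \<Rightarrow> real) \<Rightarrow> 'a \<times> real \<Rightarrow> real" where
  "gauss_integral q p = (\<integral>y. q p y * gauss_kernel p y \<partial>M)"

lemma gauss_integrand_measurable:
  assumes "Ck_poly_growth 0 q" "p \<in> upper_half"
  shows "(\<lambda>y. q p y * gauss_kernel p y) \<in> borel_measurable M"
proof -
  have "(\<lambda>y. gauss_kernel p y) \<in> borel_measurable borel"
    unfolding gauss_kernel_def sq_dist_def using assms(2)
    by (intro borel_measurable_continuous_onI continuous_intros) (auto simp: mem_upper_half_iff)
  with assms show ?thesis by (intro measurable_from_borel borel_measurable_times) auto
qed

lemma integrable_gauss_integrand:
  assumes "Ck_poly_growth 0 q" "p \<in> upper_half"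
  shows "integrable M (\<lambda>y. q p y * gauss_kernel p y)"
proof -
  obtain B where "\<forall>\<^sub>F p' in nhds p. \<forall>y. \<bar>q p' y * gauss_kernel p' y\<bar> \<le> B"
    using gauss_integrand_bounded_near[OF assms] by blast
  then have "\<forall>y. \<bar>q p y * gauss_kernel p y\<bar> \<le> B" by (rule eventually_nhds_x_imp_x)
  then show ?thesis
    by (intro integrable_const_bound[where B = B] gauss_integrand_measurable assms) auto
qed

lemma has_derivative_gauss_integral:
  assumes q: "Ck_poly_growth 0 q" and q': "\<And>v. Ck_poly_growth 0 (\<lambda>p y. q' p y v)"
    and der: "\<forall>p\<in>upper_half. \<forall>y. ((\<lambda>p. q p y) has_derivative q' p y) (at p)"
    and p: "p \<in> upper_half"
  shows "(gauss_integral q has_derivative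
           (\<lambda>v. gauss_integral (\<lambda>p y. q' p y v + q p y * gauss_kernel_log_deriv p y v) p)) (at p)"
proof -
  define dq where "dq v p y = (q' p y v + q p y * gauss_kernel_log_deriv p y v) * gauss_kernel p y" for v p y
  have dq_bound: "\<exists>B. \<forall>\<^sub>F p' in nhds p. \<forall>y. \<bar>dq v p' y\<bar> \<le> B" for v
    unfolding dq_def
    by (intro gauss_integrand_bounded_near p Ck_poly_growth_0_add Ck_poly_growth_0_mult q q'
        Ck_poly_growth_0[OF Ck_poly_growth_gauss_kernel_log_deriv])
  obtain B where B: "\<forall>b\<in>Basis. \<forall>\<^sub>F p' in nhds p. \<forall>y. \<bar>dq b p' y\<bar> \<le> B b"
    using bchoice[of Basis "\<lambda>b B. \<forall>\<^sub>F p' in nhds p. \<forall>y. \<bar>dq b p' y\<bar> \<le> B"] dq_bound by blast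
  have "\<forall>\<^sub>F p' in nhds p. p' \<in> upper_half \<and> (\<forall>b\<in>Basis. \<forall>y. \<bar>dq b p' y\<bar> \<le> B b)"
    using eventually_nhds_in_open[OF open_upper_half p] B
    by (intro eventually_conj eventually_ball_finite) auto
  then obtain e where e: "e > 0"
    and ball: "\<And>p'. p' \<in> ball p e \<Longrightarrow> p' \<in> upper_half \<and> (\<forall>b\<in>Basis. \<forall>y. \<bar>dq b p' y\<bar> \<le> B b)"
    unfolding eventually_nhds_metric by (auto simp: dist_commute)
  have integrand_der: "((\<lambda>p. q p y * gauss_kernel p y) has_derivative (\<lambda>v. dq v p' y)) (at p')"
    if "p' \<in> upper_half" for p' y
    unfolding dq_def
    by (rule has_derivative_eq_rhs[OF has_derivative_mult[OF _ has_derivative_gauss_kernel]])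
      (use der that in \<open>auto simp: algebra_simps\<close>)
  have "((\<lambda>p. \<integral>y. q p y * gauss_kernel p y \<partial>M) has_derivative (\<lambda>v. \<integral>y. dq v p y \<partial>M)) (at p)"
  proof (rule has_derivative_integral[OF e, where C = "\<Sum>b\<in>Basis. B b"])
    show "0 \<le> (\<Sum>b\<in>Basis. B b)"
      using B ball[of p] e by (intro sum_nonneg) (auto intro: order_trans[OF abs_ge_zero])
    show "\<bar>dq v p' y\<bar> \<le> (\<Sum>b\<in>Basis. B b) * norm v" if "p' \<in> ball p e" for p' y v
    proof -
      have "linear (\<lambda>v. dq v p' y)"
        using integrand_der ball[OF that] has_derivative_linear by blast
      then show ?thesis using ball[OF that] by (intro linear_abs_le_Basis_sum) auto
    qed
    show "(\<lambda>y. q p' y * gauss_kernel p' y) \<in> borel_measurable M" if "p' \<in> ball p e" for p'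
      using gauss_integrand_measurable[OF q] ball[OF that] by blast
    show "(\<lambda>y. dq v p y) \<in> borel_measurable M" for v
      unfolding dq_def
      by (intro gauss_integrand_measurable p Ck_poly_growth_0_add Ck_poly_growth_0_mult q q'
          Ck_poly_growth_0[OF Ck_poly_growth_gauss_kernel_log_deriv])
  qed (use integrand_der ball integrable_gauss_integrand[OF q p] in auto)
  then show ?thesis unfolding gauss_integral_def[abs_def] dq_def .
qed

lemma continuous_on_gauss_integral:
  assumes q: "Ck_poly_growth 0 q"
  shows "continuous_on upper_half (gauss_integral q)"
proof (intro continuous_at_imp_continuous_on ballI)
  fix p :: "'a \<times> real" assume p: "p \<in> upper_half"
  obtain B where B: "\<forall>\<^sub>F p' in nhds p. \<forall>y. \<bar>q p' y * gauss_kernel p' y\<bar> \<le> B"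
    using gauss_integrand_bounded_near[OF q p] by blast
  show "isCont (gauss_integral q) p"
    unfolding isCont_def gauss_integral_def
  proof (rule tendsto_integral_dominated[OF finite_measure_axioms, where B = B])
    have "\<forall>\<^sub>F p' in nhds p. (\<lambda>y. q p' y * gauss_kernel p' y) \<in> borel_measurable M \<and>
        (\<forall>y\<in>space M. \<bar>q p' y * gauss_kernel p' y\<bar> \<le> B)"
      using eventually_nhds_in_open[OF open_upper_half p] B
      by eventually_elim (use gauss_integrand_measurable[OF q] in blast)
    then show "\<forall>\<^sub>F p' in at p. (\<lambda>y. q p' y * gauss_kernel p' y) \<in> borel_measurable M \<and>
        (\<forall>y\<in>space M. \<bar>q p' y * gauss_kernel p' y\<bar> \<le> B)"
      by (simp add: eventually_at_filter eventually_mono)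
    have "isCont (\<lambda>p. q p y * gauss_kernel p y) p" for y
      using q p open_upper_half continuous_on_eq_continuous_at has_derivative_gauss_kernel[OF p]
      by (intro isCont_mult) (auto dest: has_derivative_continuous)
    then show "AE y in M. ((\<lambda>p'. q p' y * gauss_kernel p' y) \<longlongrightarrow> q p y * gauss_kernel p y) (at p)"
      by (simp add: isCont_def)
  qed (use gauss_integrand_measurable[OF q p] in auto)
qed

lemma Ck_on_gauss_integral: "Ck_poly_growth n q \<Longrightarrow> Ck_on n upper_half (gauss_integral q)"
proof (induction n arbitrary: q)
  case 0
  then show ?case using continuous_on_gauss_integral by simp
next
  case (Suc n)
  from Suc.prems obtain q'
    where q': "\<forall>p\<in>upper_half. \<forall>y. ((\<lambda>p. q p y) has_derivative q' p y) (at p)"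
      "\<forall>v. Ck_poly_growth n (\<lambda>p y. q' p y v)"
    by auto
  have qn: "Ck_poly_growth n q" using Suc.prems Ck_poly_growth_SucD by blast
  show ?case unfolding Ck_on.simps
  proof (intro exI conjI ballI allI)
    show "(gauss_integral q has_derivative
        (\<lambda>v. gauss_integral (\<lambda>p y. q' p y v + q p y * gauss_kernel_log_deriv p y v) p)) (at p)"
      if "p \<in> upper_half" for p
      by (rule has_derivative_gauss_integral[OF Ck_poly_growth_0[OF qn]
            Ck_poly_growth_0[OF q'(2)[rule_format]] q'(1) that])
    show "Ck_on n upper_half (\<lambda>p. gauss_integral (\<lambda>p y. q' p y v + q p y * gauss_kernel_log_deriv p y v) p)" for v
      by (intro Suc.IH Ck_poly_growth_add Ck_poly_growth_mult Ck_poly_growth_gauss_kernel_log_deriv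
          qn q'(2)[rule_format])
  qed
qed

end

section \<open>The function F\<close>

lemma mult_ln_ge_mult_ln_minus:
  fixes w L :: real
  assumes "w > 0" "L > 0"
  shows "w * ln L - L \<le> w * ln w"
proof -
  have "ln (L / w) \<le> L / w - 1" by (rule ln_le_minus_one) (use assms in simp)
  then have "w * (ln L - ln w) \<le> w * (L / w - 1)"
    using assms by (intro mult_left_mono) (auto simp: ln_div)
  then show ?thesis using assms by (simp add: algebra_simps)
qed

lemma (in prob_space) integral_mult_ln_ge:
  fixes w :: "'a \<Rightarrow> real"
  assumes pos: "\<And>y. w y > 0" and int: "integrable M w" "integrable M (\<lambda>y. w y * ln (w y))"
    and A: "A \<in> events" and L: "L > 0"
  shows "ln L * (\<integral>y. indicator A y * w y \<partial>M) - L * prob A - 1 \<le> (\<integral>y. w y * ln (w y) \<partial>M)"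
proof -
  have int_A: "integrable M (\<lambda>y. indicator A y * w y)"
    using integrable_mult_indicator[OF A int(1)] by simp
  have int_ind: "integrable M (\<lambda>y. indicator A y :: real)"
    using A by (simp add: integrable_indicator_iff emeasure_eq_measure)
  have "ln L * (\<integral>y. indicator A y * w y \<partial>M) - L * prob A - 1
      = (\<integral>y. ln L * (indicator A y * w y) - L * indicator A y - 1 \<partial>M)"
    using int_A int_ind A by (simp add: Bochner_Integration.integral_diff prob_space)
  also have "\<dots> \<le> (\<integral>y. w y * ln (w y) \<partial>M)"
  proof (rule integral_mono)
    show "integrable M (\<lambda>y. ln L * (indicator A y * w y) - L * indicator A y - 1)"
      using int_A int_ind by (intro Bochner_Integration.integrable_diff integrable_mult_right) auto
    show "ln L * (indicator A y * w y) - L * indicator A y - 1 \<le> w y * ln (w y)" for y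
      using mult_ln_ge_mult_ln_minus[OF pos[of y] L] mult_ln_ge_mult_ln_minus[OF pos[of y], of 1]
      by (cases "y \<in> A") (auto simp: algebra_simps)
  qed (use int in auto)
  finally show ?thesis .
qed

lemma sphere_in_null_sets_density:
  fixes f :: "'a::euclidean_space \<Rightarrow> ennreal"
  assumes "f \<in> borel_measurable borel"
  shows "sphere c r \<in> null_sets (density lborel f)"
proof -
  have null: "sphere c r \<in> null_sets lborel"
    using negligible_sphere[of c r]
    by (auto simp: null_sets_completion_iff negligible_iff_null_sets negligible_convex_frontier)
  then have "AE x in lborel. x \<in> sphere c r \<longrightarrow> f x = 0"
    by (rule AE_mp[OF AE_not_in]) auto
  with null show ?thesis
    using assms by (subst null_sets_density_iff) auto
qed

locale null_spheres_prob = finite_borel_measure M + prob_space M for M :: "'a::euclidean_space measure" +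
  assumes sphere_null: "sphere c r \<in> null_sets M"
begin

abbreviation gauss_mass :: "'a \<times> real \<Rightarrow> real" where
  "gauss_mass \<equiv> gauss_integral (\<lambda>_ _. 1)"

lemma gauss_integral_pos:
  assumes q: "Ck_poly_growth 0 q" and p: "p \<in> upper_half"
    and nonneg: "\<And>y. q p y \<ge> 0" and nonzero: "AE y in M. q p y \<noteq> 0"
  shows "gauss_integral q p > 0"
proof -
  have nonneg': "AE y in M. 0 \<le> q p y * gauss_kernel p y"
    by (intro AE_I2 mult_nonneg_nonneg nonneg less_imp_le[OF gauss_kernel_pos])
  have "gauss_integral q p \<noteq> 0"
  proof
    assume "gauss_integral q p = 0"
    then have "AE y in M. q p y * gauss_kernel p y = 0"
      using integral_nonneg_eq_0_iff_AE[OF integrable_gauss_integrand[OF q p] nonneg']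
      unfolding gauss_integral_def by blast
    with nonzero have "AE y in M. False"
      by eventually_elim (metis gauss_kernel_pos less_irrefl mult_eq_0_iff)
    then show False by simp
  qed
  moreover have "gauss_integral q p \<ge> 0"
    unfolding gauss_integral_def using nonneg' by (rule integral_nonneg_AE)
  ultimately show ?thesis by simp
qed

lemma gauss_mass_pos: "p \<in> upper_half \<Longrightarrow> gauss_mass p > 0"
  by (rule gauss_integral_pos[OF Ck_poly_growth_0[OF Ck_poly_growth_const]]) auto

lemma gauss_w_eq: "gauss_w M x \<sigma> y = gauss_kernel (x, \<sigma>) y / gauss_mass (x, \<sigma>)"
  by (simp add: gauss_w_def gauss_integral_def gauss_kernel_def sq_dist_def)

lemma gauss_w_ln_gauss_w_eq:
  assumes "\<sigma> > 0"
  shows "gauss_w M x \<sigma> y * ln (gauss_w M x \<sigma> y)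
    = - (inverse (2 * \<sigma>\<^sup>2 * gauss_mass (x, \<sigma>)) * (sq_dist (x, \<sigma>) y * gauss_kernel (x, \<sigma>) y))
      - ln (gauss_mass (x, \<sigma>)) * inverse (gauss_mass (x, \<sigma>)) * (1 * gauss_kernel (x, \<sigma>) y)"
proof -
  have Z: "gauss_mass (x, \<sigma>) > 0" using assms gauss_mass_pos by (simp add: mem_upper_half_iff)
  have "ln (gauss_kernel (x, \<sigma>) y) = - sq_dist (x, \<sigma>) y / (2 * \<sigma>\<^sup>2)"
    by (simp add: gauss_kernel_def)
  then have lnw: "ln (gauss_w M x \<sigma> y) = - sq_dist (x, \<sigma>) y / (2 * \<sigma>\<^sup>2) - ln (gauss_mass (x, \<sigma>))"
    using Z gauss_kernel_pos[of "(x, \<sigma>)" y] by (simp add: gauss_w_eq ln_div)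
  show ?thesis
    using Z assms by (simp only: lnw) (simp add: gauss_w_eq field_simps)
qed

abbreviation gauss_moment2 :: "'a \<times> real \<Rightarrow> real" where
  "gauss_moment2 \<equiv> gauss_integral sq_dist"

lemma F_fun_eq_gauss_integrals:
  assumes "\<sigma> > 0"
  shows "F_fun \<rho> M x \<sigma>
    = - (gauss_moment2 (x, \<sigma>) / (2 * \<sigma>\<^sup>2 * gauss_mass (x, \<sigma>))) - ln (gauss_mass (x, \<sigma>)) + ln \<rho>"
proof -
  have p: "(x, \<sigma>) \<in> upper_half" using assms by (simp add: mem_upper_half_iff)
  have Z: "gauss_mass (x, \<sigma>) > 0" using gauss_mass_pos[OF p] .
  have "(\<integral>y. gauss_w M x \<sigma> y * ln (gauss_w M x \<sigma> y) \<partial>M)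
      = - (inverse (2 * \<sigma>\<^sup>2 * gauss_mass (x, \<sigma>)) * gauss_moment2 (x, \<sigma>))
        - ln (gauss_mass (x, \<sigma>)) * inverse (gauss_mass (x, \<sigma>)) * gauss_mass (x, \<sigma>)"
    unfolding gauss_w_ln_gauss_w_eq[OF assms] gauss_integral_def
    using integrable_gauss_integrand[OF Ck_poly_growth_0[OF Ck_poly_growth_sq_dist] p]
      integrable_gauss_integrand[OF Ck_poly_growth_0[OF Ck_poly_growth_const] p]
    by simp
  with Z show ?thesis by (simp add: F_fun_def field_simps)
qed

lemma Ck_on_F_fun: "Ck_on n upper_half (\<lambda>p. F_fun \<rho> M (fst p) (snd p))"
proof (rule Ck_on_cong[OF open_upper_half])
  have mass: "Ck_on n upper_half gauss_mass"
    by (rule Ck_on_gauss_integral[OF Ck_poly_growth_const])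
  have moment: "Ck_on n upper_half gauss_moment2"
    by (rule Ck_on_gauss_integral[OF Ck_poly_growth_sq_dist])
  have denom: "Ck_on n upper_half (\<lambda>p. 2 * (snd p)\<^sup>2 * gauss_mass p)"
    by (rule Ck_on_mult[OF Ck_on_mult[OF Ck_on_const Ck_on_power[OF Ck_on_snd]] mass])
  have "2 * (snd p)\<^sup>2 * gauss_mass p \<noteq> 0" if "p \<in> upper_half" for p
    using that gauss_mass_pos[OF that] by (simp add: mem_upper_half_iff)
  with denom have "Ck_on n upper_half (\<lambda>p. gauss_moment2 p / (2 * (snd p)\<^sup>2 * gauss_mass p))"
    using Ck_on_divide[OF moment] by blast
  moreover have "Ck_on n upper_half (\<lambda>p. ln (gauss_mass p))"
    using Ck_on_ln[OF mass] gauss_mass_pos by blast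
  ultimately show "Ck_on n upper_half (\<lambda>p. - (gauss_moment2 p / (2 * (snd p)\<^sup>2 * gauss_mass p))
      - ln (gauss_mass p) + ln \<rho>)"
    by (intro Ck_on_add[OF Ck_on_diff[OF Ck_on_minus] Ck_on_const])
  show "- (gauss_moment2 p / (2 * (snd p)\<^sup>2 * gauss_mass p)) - ln (gauss_mass p) + ln \<rho>
      = F_fun \<rho> M (fst p) (snd p)" if "p \<in> upper_half" for p
    using F_fun_eq_gauss_integrals[of "snd p" \<rho> "fst p"] that by (simp add: mem_upper_half_iff)
qed

lemma gauss_integral_has_real_derivative_sigma:
  assumes q: "Ck_poly_growth 1 q" and q_indep: "\<And>x s t y. q (x, s) y = q (x, t) y" and "\<sigma> > 0"
  shows "((\<lambda>t. gauss_integral q (x, t)) has_real_derivative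
           gauss_integral (\<lambda>p y. q p y * sq_dist p y) (x, \<sigma>) / \<sigma> ^ 3) (at \<sigma>)"
proof -
  define p where "p = (x, \<sigma>)"
  have p: "p \<in> upper_half" using \<open>\<sigma> > 0\<close> by (simp add: p_def mem_upper_half_iff)
  from q obtain q' where der: "\<forall>p\<in>upper_half. \<forall>y. ((\<lambda>p. q p y) has_derivative q' p y) (at p)"
    and q': "\<And>v. Ck_poly_growth 0 (\<lambda>p y. q' p y v)"
    by (auto simp: numeral_eq_Suc)
  have q'_sigma: "q' p y (0, 1) = 0" for y
  proof -
    have "((\<lambda>t. q (x, t) y) has_real_derivative q' p y (0, 1)) (at \<sigma>)"
      using has_derivative_Pair_snd_partial[OF der[rule_format, OF p, of y, unfolded p_def]]
      by (simp add: p_def)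
    moreover have "(\<lambda>t. q (x, t) y) = (\<lambda>t. q (x, \<sigma>) y)"
      using q_indep by blast
    then have "((\<lambda>t. q (x, t) y) has_real_derivative 0) (at \<sigma>)" by simp
    ultimately show ?thesis by (rule DERIV_unique)
  qed
  have "((\<lambda>t. gauss_integral q (x, t)) has_real_derivative
      gauss_integral (\<lambda>p y. q' p y (0, 1) + q p y * gauss_kernel_log_deriv p y (0, 1)) p) (at \<sigma>)"
    using has_derivative_Pair_snd_partial
      has_derivative_gauss_integral[OF Ck_poly_growth_0[OF q] q' der p]
    by (simp add: p_def)
  moreover have "gauss_integral (\<lambda>p y. q' p y (0, 1) + q p y * gauss_kernel_log_deriv p y (0, 1)) p
      = gauss_integral (\<lambda>p y. q p y * sq_dist p y) p / \<sigma> ^ 3"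
  proof -
    have "(q' p y (0, 1) + q p y * gauss_kernel_log_deriv p y (0, 1)) * gauss_kernel p y
        = q p y * sq_dist p y * gauss_kernel p y / \<sigma> ^ 3" for y
      using \<open>\<sigma> > 0\<close> q'_sigma[of y] by (simp add: gauss_kernel_log_deriv_def p_def field_simps)
    then show ?thesis unfolding gauss_integral_def by (simp add: integral_divide_zero)
  qed
  ultimately show ?thesis by (simp add: p_def)
qed

lemma F_fun_has_real_derivative_sigma:
  fixes x :: 'a and \<sigma> :: real
  assumes "\<sigma> > 0"
  defines "Z \<equiv> gauss_mass (x, \<sigma>)" and "a \<equiv> gauss_moment2 (x, \<sigma>)"
    and "c \<equiv> gauss_integral (\<lambda>p y. sq_dist p y * sq_dist p y) (x, \<sigma>)"
  shows "((\<lambda>t. F_fun \<rho> M x t) has_real_derivative - (c * Z - a\<^sup>2) / (2 * \<sigma> ^ 5 * Z\<^sup>2)) (at \<sigma>)"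
proof -
  have Z: "Z > 0" unfolding Z_def using assms gauss_mass_pos by (simp add: mem_upper_half_iff)
  have dZ: "((\<lambda>t. gauss_mass (x, t)) has_real_derivative a / \<sigma> ^ 3) (at \<sigma>)"
    using gauss_integral_has_real_derivative_sigma[OF Ck_poly_growth_const _ \<open>\<sigma> > 0\<close>, of "1::real" x]
    by (simp add: a_def)
  have da: "((\<lambda>t. gauss_moment2 (x, t)) has_real_derivative c / \<sigma> ^ 3) (at \<sigma>)"
    using gauss_integral_has_real_derivative_sigma[OF Ck_poly_growth_sq_dist _ \<open>\<sigma> > 0\<close>, of x]
    by (simp add: c_def sq_dist_def)
  have "((\<lambda>t. - (gauss_moment2 (x, t) / (2 * t\<^sup>2 * gauss_mass (x, t))) - ln (gauss_mass (x, t)) + ln \<rho>)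
      has_real_derivative - (c * Z - a\<^sup>2) / (2 * \<sigma> ^ 5 * Z\<^sup>2)) (at \<sigma>)"
    using assms Z
    by (auto intro!: derivative_eq_intros dZ[folded Z_def] da[folded a_def] simp: Z_def[symmetric] a_def[symmetric])
      (simp add: field_simps power2_eq_square power3_eq_cube eval_nat_numeral)
  then show ?thesis
    by (rule has_field_derivative_transform_within_open[where S = "{0<..}"])
      (use assms F_fun_eq_gauss_integrals in auto)
qed

lemma gauss_variance_pos:
  fixes x :: 'a and \<sigma> :: real
  assumes "\<sigma> > 0"
  defines "Z \<equiv> gauss_mass (x, \<sigma>)" and "a \<equiv> gauss_moment2 (x, \<sigma>)"
    and "c \<equiv> gauss_integral (\<lambda>p y. sq_dist p y * sq_dist p y) (x, \<sigma>)"
  shows "a\<^sup>2 < c * Z"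
proof -
  have p: "(x, \<sigma>) \<in> upper_half" using assms by (simp add: mem_upper_half_iff)
  have Z: "Z > 0" unfolding Z_def by (rule gauss_mass_pos[OF p])
  define m where "m = a / Z"
  \<comment> \<open>the variance of |x - y|^2 under the Gaussian weights\<close>
  define v where "v = gauss_integral (\<lambda>p y. (sq_dist p y - m)\<^sup>2) (x, \<sigma>)"
  have amplitude: "Ck_poly_growth 0 (\<lambda>(p :: 'a \<times> real) y. (sq_dist p y - m)\<^sup>2)"
    by (rule Ck_poly_growth_power[OF Ck_poly_growth_diff[OF Ck_poly_growth_sq_dist Ck_poly_growth_const]])
  have "v > 0" unfolding v_def
  proof (rule gauss_integral_pos[OF amplitude p])
    have "AE y in M. y \<notin> sphere x (sqrt m)" by (rule AE_not_in[OF sphere_null])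
    then show "AE y in M. (sq_dist (x, \<sigma>) y - m)\<^sup>2 \<noteq> 0"
    proof eventually_elim
      case (elim y)
      then have "norm (x - y) \<noteq> sqrt m" by (simp add: dist_norm)
      then show ?case by (auto simp: sq_dist_def)
    qed
  qed simp
  have int: "integrable M (\<lambda>y. q (x, \<sigma>) y * gauss_kernel (x, \<sigma>) y)" if "Ck_poly_growth 0 q" for q
    using integrable_gauss_integrand[OF that p] .
  have "v = c - 2 * m * a + m\<^sup>2 * Z"
  proof -
    have "v = (\<integral>y. sq_dist (x, \<sigma>) y * sq_dist (x, \<sigma>) y * gauss_kernel (x, \<sigma>) y
        - (2 * m) * (sq_dist (x, \<sigma>) y * gauss_kernel (x, \<sigma>) y) + m\<^sup>2 * (1 * gauss_kernel (x, \<sigma>) y) \<partial>M)"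
      unfolding v_def gauss_integral_def
      by (rule Bochner_Integration.integral_cong) (simp_all add: power2_eq_square algebra_simps)
    also have "\<dots> = c - 2 * m * a + m\<^sup>2 * Z"
      using int[OF Ck_poly_growth_0[OF Ck_poly_growth_mult[OF Ck_poly_growth_sq_dist Ck_poly_growth_sq_dist]]]
        int[OF Ck_poly_growth_0[OF Ck_poly_growth_sq_dist]] int[OF Ck_poly_growth_0[OF Ck_poly_growth_const]]
      by (simp add: a_def c_def Z_def gauss_integral_def)
    finally show ?thesis .
  qed
  also have "\<dots> = (c * Z - a\<^sup>2) / Z"
    using Z unfolding m_def by (simp add: field_simps power2_eq_square)
  finally show ?thesis using \<open>v > 0\<close> Z by (simp add: zero_less_divide_iff)
qed

lemma cball_in_sets: "cball x r \<in> sets M"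
  unfolding sets_eq_borel by (rule borel_closed) simp

lemma measure_cball_tendsto_1: "(\<lambda>n. measure M (cball x (real n))) \<longlonglongrightarrow> 1"
proof -
  have "(\<lambda>n. measure M (cball x (real n))) \<longlonglongrightarrow> measure M (\<Union>n. cball x (real n))"
    by (rule finite_Lim_measure_incseq) (auto simp: cball_in_sets incseq_def)
  moreover have "(\<Union>n. cball x (real n)) = UNIV"
    using real_arch_simple by auto
  ultimately show ?thesis using prob_space space_eq_UNIV by simp
qed

lemma continuous_measure_cball: "continuous_on UNIV (\<lambda>t. measure M (cball x t))"
proof (intro continuous_at_imp_continuous_on ballI)
  fix t0 :: real
  have ind_meas: "(\<lambda>y. indicator (cball x t) y :: real) \<in> borel_measurable M" for t
    by (intro borel_measurable_indicator cball_in_sets)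
  have measure_eq: "measure M (cball x t) = (\<integral>y. indicator (cball x t) y \<partial>M)" for t
    by (simp add: space_eq_UNIV)
  show "isCont (\<lambda>t. measure M (cball x t)) t0"
    unfolding isCont_def measure_eq
  proof (rule tendsto_integral_dominated[OF finite_measure_axioms, where B = 1])
    show "\<forall>\<^sub>F t in at t0. (\<lambda>y. indicator (cball x t) y :: real) \<in> borel_measurable M \<and>
        (\<forall>y\<in>space M. \<bar>indicator (cball x t) y :: real\<bar> \<le> 1)"
      using ind_meas by (auto split: split_indicator)
    \<comment> \<open>off the null sphere of radius t0 the indicator is locally constant in t\<close>
    show "AE y in M. ((\<lambda>t. indicator (cball x t) y :: real) \<longlongrightarrow> indicator (cball x t0) y) (at t0)"
      using AE_not_in[OF sphere_null[of x t0]]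
    proof eventually_elim
      case (elim y)
      then consider "dist x y < t0" | "t0 < dist x y" by fastforce
      then have "\<forall>\<^sub>F t in at t0. (indicator (cball x t) y :: real) = indicator (cball x t0) y"
      proof cases
        case 1
        then have "\<forall>\<^sub>F t in at t0. dist x y < t" by (rule order_tendstoD(1)[OF tendsto_ident_at])
        then show ?thesis by eventually_elim (use 1 in \<open>simp add: indicator_def\<close>)
      next
        case 2
        then have "\<forall>\<^sub>F t in at t0. t < dist x y" by (rule order_tendstoD(2)[OF tendsto_ident_at])
        then show ?thesis by eventually_elim (use 2 in \<open>simp add: indicator_def\<close>)
      qed
      then show ?case by (rule tendsto_eventually)
    qed
  qed (rule ind_meas)
qed

lemma measure_cball_0: "measure M (cball x 0) = 0"
proof -
  have "cball x 0 = sphere x 0" by auto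
  then show ?thesis using null_setsD1[OF sphere_null[of x 0]] by (simp add: measure_def)
qed

lemma ex_measure_cball_eq:
  assumes "0 < \<epsilon>" "\<epsilon> < 1"
  shows "\<exists>r\<ge>0. measure M (cball x r) = \<epsilon>"
proof -
  from order_tendstoD(1)[OF measure_cball_tendsto_1[of x] assms(2)]
  obtain N where "\<epsilon> < measure M (cball x (real N))" by (auto simp: eventually_sequentially)
  moreover have "continuous_on {0..real N} (\<lambda>t. measure M (cball x t))"
    by (rule continuous_on_subset[OF continuous_measure_cball]) simp
  ultimately show ?thesis
    using IVT'[of "\<lambda>t. measure M (cball x t)" 0 \<epsilon> "real N"] measure_cball_0 assms by force
qed

lemma integrable_gauss_kernel: "\<sigma> > 0 \<Longrightarrow> integrable M (\<lambda>y. gauss_kernel (x, \<sigma>) y)"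
  using integrable_gauss_integrand[OF Ck_poly_growth_0[OF Ck_poly_growth_const], of "(x, \<sigma>)" 1]
  by (simp add: mem_upper_half_iff)

lemma gauss_kernel_ge_on_cball:
  assumes "y \<in> cball x R"
  shows "exp (- R\<^sup>2 / (2 * \<sigma>\<^sup>2)) \<le> gauss_kernel (x, \<sigma>) y"
proof -
  have "(norm (x - y))\<^sup>2 \<le> R\<^sup>2"
    using assms by (intro power_mono) (auto simp: dist_norm)
  then show ?thesis by (simp add: gauss_kernel_def sq_dist_def divide_right_mono)
qed

lemma gauss_mass_ge:
  assumes "\<sigma> > 0"
  shows "exp (- R\<^sup>2 / (2 * \<sigma>\<^sup>2)) * measure M (cball x R) \<le> gauss_mass (x, \<sigma>)"
proof -
  have "exp (- R\<^sup>2 / (2 * \<sigma>\<^sup>2)) * measure M (cball x R)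
      = (\<integral>y. exp (- R\<^sup>2 / (2 * \<sigma>\<^sup>2)) * indicator (cball x R) y \<partial>M)"
    by (simp add: space_eq_UNIV)
  also have "\<dots> \<le> (\<integral>y. 1 * gauss_kernel (x, \<sigma>) y \<partial>M)"
  proof (rule integral_mono)
    show "integrable M (\<lambda>y. exp (- R\<^sup>2 / (2 * \<sigma>\<^sup>2)) * indicator (cball x R) y)"
      using cball_in_sets
      by (intro integrable_mult_right) (simp add: integrable_indicator_iff emeasure_eq_measure)
    show "integrable M (\<lambda>y. 1 * gauss_kernel (x, \<sigma>) y)"
      using integrable_gauss_kernel[OF assms] by simp
    show "exp (- R\<^sup>2 / (2 * \<sigma>\<^sup>2)) * indicator (cball x R) y \<le> 1 * gauss_kernel (x, \<sigma>) y" for y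
      using gauss_kernel_ge_on_cball[of y x R \<sigma>] gauss_kernel_pos[of "(x, \<sigma>)" y]
      by (auto split: split_indicator)
  qed
  finally show ?thesis by (simp add: gauss_integral_def)
qed

lemma F_fun_sigma_deriv_neg:
  assumes "\<sigma> > 0"
  shows "\<exists>d<0. ((\<lambda>t. F_fun \<rho> M x t) has_real_derivative d) (at \<sigma>)"
proof -
  have "gauss_mass (x, \<sigma>) > 0" using assms gauss_mass_pos by (simp add: mem_upper_half_iff)
  with gauss_variance_pos[OF assms, of x] assms
  have "- (gauss_integral (\<lambda>p y. sq_dist p y * sq_dist p y) (x, \<sigma>) * gauss_mass (x, \<sigma>)
      - (gauss_moment2 (x, \<sigma>))\<^sup>2) / (2 * \<sigma> ^ 5 * (gauss_mass (x, \<sigma>))\<^sup>2) < 0"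
    by (intro divide_neg_pos) auto
  with F_fun_has_real_derivative_sigma[OF assms] show ?thesis by blast
qed

lemma F_fun_neg_large_sigma:
  assumes "0 < \<rho>" "\<rho> < 1"
  shows "\<exists>\<sigma>>0. F_fun \<rho> M x \<sigma> < 0"
proof -
  obtain N where "\<rho> < measure M (cball x (real N))"
    using order_tendstoD(1)[OF measure_cball_tendsto_1[of x] assms(2)]
    by (auto simp: eventually_sequentially)
  then obtain R m where m: "m = measure M (cball x R)" "\<rho> < m" by blast
  define \<eta> where "\<eta> = - ln (\<rho> / m)"
  have \<eta>: "\<eta> > 0" using m assms by (simp add: \<eta>_def)
  define \<sigma> where "\<sigma> = sqrt (R\<^sup>2 / \<eta> + 1)"
  have \<sigma>: "\<sigma> > 0" "\<sigma>\<^sup>2 = R\<^sup>2 / \<eta> + 1"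
    unfolding \<sigma>_def using \<eta> by (auto intro: add_nonneg_pos)
  have "\<eta> * (2 * \<sigma>\<^sup>2) = 2 * R\<^sup>2 + 2 * \<eta>" using \<sigma>(2) \<eta> by (simp add: field_simps)
  then have "R\<^sup>2 < \<eta> * (2 * \<sigma>\<^sup>2)" using \<eta> zero_le_power2[of R] by linarith
  then have "R\<^sup>2 / (2 * \<sigma>\<^sup>2) < \<eta>" using \<sigma>(1) by (simp add: pos_divide_less_eq)
  then have "exp (- \<eta>) < exp (- R\<^sup>2 / (2 * \<sigma>\<^sup>2))" by simp
  moreover have "exp (- \<eta>) = \<rho> / m" using m assms by (simp add: \<eta>_def)
  ultimately have "\<rho> / m < exp (- R\<^sup>2 / (2 * \<sigma>\<^sup>2))" by simp
  then have "\<rho> < exp (- R\<^sup>2 / (2 * \<sigma>\<^sup>2)) * m"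
    using m assms by (simp add: divide_less_eq)
  also have "\<dots> \<le> gauss_mass (x, \<sigma>)" unfolding m by (rule gauss_mass_ge[OF \<sigma>(1)])
  finally have "\<rho> < gauss_mass (x, \<sigma>)" .
  moreover have "gauss_moment2 (x, \<sigma>) \<ge> 0"
    unfolding gauss_integral_def
    by (intro integral_nonneg_AE AE_I2 mult_nonneg_nonneg less_imp_le[OF gauss_kernel_pos])
      (simp add: sq_dist_def)
  ultimately have "0 \<le> gauss_moment2 (x, \<sigma>) / (2 * \<sigma>\<^sup>2 * gauss_mass (x, \<sigma>))"
    using assms \<sigma>(1) by (intro divide_nonneg_pos) auto
  moreover have "ln \<rho> < ln (gauss_mass (x, \<sigma>))"
    using \<open>\<rho> < gauss_mass (x, \<sigma>)\<close> assms by simp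
  ultimately have "F_fun \<rho> M x \<sigma> < 0"
    unfolding F_fun_eq_gauss_integrals[OF \<sigma>(1)] by linarith
  with \<sigma>(1) show ?thesis by blast
qed

lemma gauss_tail_le:
  assumes "\<sigma> > 0" "0 \<le> r"
  shows "(\<integral>y. indicator (- cball x r) y * gauss_kernel (x, \<sigma>) y \<partial>M) \<le> exp (- r\<^sup>2 / (2 * \<sigma>\<^sup>2))"
proof -
  have "(\<integral>y. indicator (- cball x r) y * gauss_kernel (x, \<sigma>) y \<partial>M) \<le> (\<integral>y. exp (- r\<^sup>2 / (2 * \<sigma>\<^sup>2)) \<partial>M)"
  proof (rule integral_mono)
    have "- cball x r \<in> sets M" by (simp add: sets_eq_borel)
    from integrable_mult_indicator[OF this integrable_gauss_kernel[OF assms(1)]]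
    show "integrable M (\<lambda>y. indicator (- cball x r) y * gauss_kernel (x, \<sigma>) y)" by simp
    show "indicator (- cball x r) y * gauss_kernel (x, \<sigma>) y \<le> exp (- r\<^sup>2 / (2 * \<sigma>\<^sup>2))" for y
    proof (cases "y \<in> cball x r")
      case False
      then have "r\<^sup>2 \<le> (norm (x - y))\<^sup>2" using assms by (intro power_mono) (auto simp: dist_norm)
      with False assms(1) show ?thesis
        by (simp add: gauss_kernel_def sq_dist_def divide_right_mono)
    qed simp
  qed simp
  then show ?thesis using prob_space by simp
qed

lemma gauss_w_concentrates:
  assumes "\<sigma> > 0" "0 \<le> r"
    and small: "exp (- r\<^sup>2 / (2 * \<sigma>\<^sup>2)) \<le> exp (- r'\<^sup>2 / (2 * \<sigma>\<^sup>2)) * measure M (cball x r') / 2"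
  shows "1 / 2 \<le> (\<integral>y. indicator (cball x r) y * gauss_w M x \<sigma> y \<partial>M)"
proof -
  note int = integrable_gauss_kernel[OF assms(1), of x]
  have "gauss_mass (x, \<sigma>) = (\<integral>y. indicator (cball x r) y * gauss_kernel (x, \<sigma>) y
      + indicator (- cball x r) y * gauss_kernel (x, \<sigma>) y \<partial>M)"
    unfolding gauss_integral_def
    by (rule Bochner_Integration.integral_cong) (auto split: split_indicator)
  also have "\<dots> = (\<integral>y. indicator (cball x r) y * gauss_kernel (x, \<sigma>) y \<partial>M)
      + (\<integral>y. indicator (- cball x r) y * gauss_kernel (x, \<sigma>) y \<partial>M)"
    using integrable_mult_indicator[OF cball_in_sets int] integrable_mult_indicator[OF _ int, of "- cball x r"]
    by (intro Bochner_Integration.integral_add) (simp_all add: sets_eq_borel)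
  finally have "gauss_mass (x, \<sigma>) / 2 \<le> (\<integral>y. indicator (cball x r) y * gauss_kernel (x, \<sigma>) y \<partial>M)"
    using gauss_tail_le[OF assms(1,2), of x] small gauss_mass_ge[OF assms(1), of r' x] by linarith
  moreover have "gauss_mass (x, \<sigma>) > 0" using assms gauss_mass_pos by (simp add: mem_upper_half_iff)
  ultimately show ?thesis by (simp add: gauss_w_eq divide_le_eq)
qed

lemma F_fun_ge_cball_weight:
  assumes \<sigma>: "\<sigma> > 0" and L: "L > 0"
  shows "ln L * (\<integral>y. indicator (cball x r) y * gauss_w M x \<sigma> y \<partial>M) - L * measure M (cball x r) - 1 + ln \<rho>
    \<le> F_fun \<rho> M x \<sigma>"
proof -
  have Z: "gauss_mass (x, \<sigma>) > 0" using \<sigma> gauss_mass_pos by (simp add: mem_upper_half_iff)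
  have w_pos: "gauss_w M x \<sigma> y > 0" for y
    using Z gauss_kernel_pos[of "(x, \<sigma>)" y] by (simp add: gauss_w_eq)
  have "gauss_w M x \<sigma> = (\<lambda>y. gauss_kernel (x, \<sigma>) y / gauss_mass (x, \<sigma>))"
    using gauss_w_eq by blast
  with integrable_gauss_kernel[OF \<sigma>, of x] have "integrable M (gauss_w M x \<sigma>)" by simp
  moreover have "integrable M (\<lambda>y. gauss_w M x \<sigma> y * ln (gauss_w M x \<sigma> y))"
    unfolding gauss_w_ln_gauss_w_eq[OF \<sigma>]
    using integrable_gauss_integrand[OF Ck_poly_growth_0[OF Ck_poly_growth_sq_dist], of "(x, \<sigma>)"]
      integrable_gauss_kernel[OF \<sigma>, of x] \<sigma>
    by (simp add: mem_upper_half_iff)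
  ultimately show ?thesis
    using integral_mult_ln_ge[OF w_pos _ _ cball_in_sets[of x r] L] unfolding F_fun_def by simp
qed

lemma F_fun_pos_small_sigma:
  assumes "0 < \<rho>" "\<rho> < 1"
  shows "\<exists>\<sigma>>0. F_fun \<rho> M x \<sigma> > 0"
proof -
  define L where "L = exp (6 - 2 * ln \<rho>)"
  have "ln \<rho> < 0" using assms by simp
  then have L: "L > 1" "ln L = 6 - 2 * ln \<rho>" by (auto simp: L_def)
  define \<epsilon> where "\<epsilon> = 1 / L"
  have \<epsilon>: "0 < \<epsilon>" "\<epsilon> < 1" using L by (auto simp: \<epsilon>_def)
  obtain r where r: "r \<ge> 0" "measure M (cball x r) = \<epsilon>"
    using ex_measure_cball_eq[OF \<epsilon>] by blast
  obtain r' where r': "r' \<ge> 0" "measure M (cball x r') = \<epsilon> / 2"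
    using ex_measure_cball_eq[of "\<epsilon> / 2"] \<epsilon> by auto
  have "r' < r"
  proof (rule ccontr)
    assume "\<not> r' < r"
    then have "measure M (cball x r) \<le> measure M (cball x r')"
      by (intro finite_measure_mono cball_in_sets) auto
    with r r' \<epsilon> show False by simp
  qed
  \<comment> \<open>\<sigma> is chosen so that the kernel outside cball x r is at most half the mass inside cball x r'\<close>
  define \<sigma> where "\<sigma> = sqrt ((r\<^sup>2 - r'\<^sup>2) / (2 * ln (4 / \<epsilon>)))"
  have ln4: "ln (4 / \<epsilon>) > 0" using \<epsilon> by simp
  have r2: "r'\<^sup>2 < r\<^sup>2" using \<open>r' < r\<close> r' by (intro power_strict_mono) auto
  have \<sigma>: "\<sigma> > 0" using ln4 r2 by (simp add: \<sigma>_def)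
  have "(r\<^sup>2 - r'\<^sup>2) / (2 * \<sigma>\<^sup>2) = ln (4 / \<epsilon>)"
    using ln4 r2 by (simp add: \<sigma>_def field_simps)
  then have "exp (- r\<^sup>2 / (2 * \<sigma>\<^sup>2)) = exp (- r'\<^sup>2 / (2 * \<sigma>\<^sup>2)) * exp (- ln (4 / \<epsilon>))"
    by (simp add: diff_divide_distrib flip: exp_add)
  also have "\<dots> = exp (- r'\<^sup>2 / (2 * \<sigma>\<^sup>2)) * measure M (cball x r') / 2"
    using \<epsilon> r' by (simp add: exp_minus)
  finally have "1 / 2 \<le> (\<integral>y. indicator (cball x r) y * gauss_w M x \<sigma> y \<partial>M)"
    by (intro gauss_w_concentrates[OF \<sigma> r(1), of r']) simp
  then have "ln L * (1 / 2) \<le> ln L * (\<integral>y. indicator (cball x r) y * gauss_w M x \<sigma> y \<partial>M)"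
    using L \<open>ln \<rho> < 0\<close> by (intro mult_left_mono) auto
  with F_fun_ge_cball_weight[OF \<sigma>, of L x r \<rho>] L r have "F_fun \<rho> M x \<sigma> \<ge> 1"
    by (simp add: \<epsilon>_def)
  with \<sigma> show ?thesis by auto
qed

lemma ex1_F_fun_zero:
  assumes "0 < \<rho>" "\<rho> < 1"
  shows "\<exists>!\<sigma>. \<sigma> > 0 \<and> F_fun \<rho> M x \<sigma> = 0"
proof -
  obtain a b where "0 < a" "F_fun \<rho> M x a > 0" "0 < b" "F_fun \<rho> M x b < 0"
    using F_fun_pos_small_sigma[OF assms, of x] F_fun_neg_large_sigma[OF assms, of x] by blast
  then show ?thesis by (intro ex1_pos_zero_of_deriv_neg F_fun_sigma_deriv_neg)
qed

lemma smooth_on_F_fun_zero: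
  assumes "0 < \<rho>" "\<rho> < 1"
  shows "smooth_on UNIV (\<lambda>x. THE \<sigma>. \<sigma> > 0 \<and> F_fun \<rho> M x \<sigma> = 0)"
proof -
  have "Ck_on (Suc k) UNIV (\<lambda>x. THE \<sigma>. \<sigma> > 0 \<and> F_fun \<rho> M (fst (x, \<sigma>)) (snd (x, \<sigma>)) = 0)" for k
    using F_fun_sigma_deriv_neg ex1_F_fun_zero[OF assms, THEN ex1_implies_ex]
    by (intro Ck_on_implicit_zero Ck_on_F_fun) auto
  then have "Ck_on (Suc k) UNIV (\<lambda>x. THE \<sigma>. \<sigma> > 0 \<and> F_fun \<rho> M x \<sigma> = 0)" for k
    by (simp only: fst_conv snd_conv)
  then show ?thesis unfolding smooth_on_def using Ck_on_SucD by blast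
qed

end

lemma null_spheres_prob_density:
  fixes f :: "'a::euclidean_space \<Rightarrow> real"
  assumes "prob_space (density lborel (\<lambda>x. ennreal (f x)))" "f \<in> borel_measurable borel"
  shows "null_spheres_prob (density lborel (\<lambda>x. ennreal (f x)))"
proof (intro null_spheres_prob.intro finite_borel_measure.intro finite_borel_measure_axioms.intro
    null_spheres_prob_axioms.intro assms(1) prob_space.finite_measure)
  show "sphere c r \<in> null_sets (density lborel (\<lambda>x. ennreal (f x)))" for c r
    using assms(2) by (intro sphere_in_null_sets_density) measurable
qed simp

theorem proposition2p2:
  fixes \<mu> :: "'a::euclidean_space measure"
    and f :: "'a \<Rightarrow> real"
    and f' :: "'a \<Rightarrow> 'a \<Rightarrow>\<^sub>L real"
  assumes prob: "prob_space \<mu>"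
    and dens: "\<mu> = density lborel (\<lambda>x. ennreal (f x))"
    and nonneg: "\<And>x. f x \<ge> 0"
    and deriv: "\<And>x. (f has_derivative blinfun_apply (f' x)) (at x)"
    and C1: "continuous_on UNIV f'"
    and fbdd: "bounded (range f)"
    and gradbdd: "bounded (range (\<lambda>x. norm (f' x)))"
  shows "\<forall>\<rho>\<in>{0<..<1}.
           (\<forall>x. \<exists>!\<sigma>. \<sigma> > 0 \<and> F_fun \<rho> \<mu> x \<sigma> = 0) \<and>
           smooth_on UNIV (\<lambda>x. THE \<sigma>. \<sigma> > 0 \<and> F_fun \<rho> \<mu> x \<sigma> = 0)"
proof -
  \<comment> \<open>The density only serves to make spheres \<mu>-null, for which measurability suffices.\<close>
  have "continuous_on UNIV f"
    using deriv by (auto intro!: continuous_at_imp_continuous_on dest: has_derivative_continuous)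
  then have "f \<in> borel_measurable borel" by (rule borel_measurable_continuous_onI)
  with prob interpret null_spheres_prob \<mu>
    unfolding dens by (rule null_spheres_prob_density)
  show ?thesis using ex1_F_fun_zero smooth_on_F_fun_zero by auto
qed

end
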